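(* Let $G=(V,E)$ be a tree with boundary with degree sequence $\pi$, and let $\pi'$ be another degree sequence (of some tree with boundary on $|V|$ vertices) with $\pi'\unlhd\pi$. Then there exists an SLO$^\ast$-tree $G^\ast=(V,E^\ast)$ in $\mathcal{T}_{\pi'}$ with $\lambda(G^\ast)\le\lambda(G)$.
   Context: A tree with boundary is a finite tree $G=(V,E)$ whose vertex set is partitioned into the set $\partial V$ of boundary vertices, which are exactly the vertices of degree $1$, and the set $V_0$ of interior vertices, which are exactly the vertices of degree at least $2$; both sets are nonempty. $\mathcal{T}_{\pi'}$ is the class of trees with boundary with degree sequence $\pi'$. Degree sequences of trees with $n$ vertices are written $\pi=(d_0,\dots,d_{k-1},d_k,\dots,d_{n-1})$ with $2\le d_0\le\dots\le d_{k-1}$ the interior degrees and $d_k=\dots=d_{n-1}=1$; for two such sequences $\pi$ (with $k$ interior entries) and $\pi'=(d'_0,\dots,d'_{n-1})$ (with $k'$ interior entries, possibly $k'\ne k$) on the same number $n$ of vertices, $\pi\unlhd\pi'$ means $\sum_{j\le r}d_j\le\sum_{j\le r}d'_j$ for all $0\le r<n$. The Dirichlet operator $\Delta_0$ is the principal submatrix of the Laplacian $D-A$ indexed by $V_0$; $\lambda(G)$ is its smallest eigenvalue. For a chosen root $v_0$, $h(v)=\mathrm{dist}(v,v_0)$; if $v,w$ are adjacent with $h(w)=h(v)+1$, $w$ is a child of $v$. A total order $\prec$ on $V$ is an SLO$^\ast$-ordering for root $v_0$ if: (S1) $v\prec w$ implies $h(v)\le h(w)$; (S2) if $v_1\prec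 v_2$ then every child of $v_1$ precedes every child of $v_2$; (S3) if $v\prec w$ and $v\in\partial V$ then $w\in\partial V$; (S4) for interior vertices $v\prec w$ implies $d_v\le d_w$. An SLO$^\ast$-tree is a tree with boundary admitting an SLO$^\ast$-ordering for some root. *)

theory Defs
  imports Complex_Main "HOL-Library.Multiset"
begin

definition graph :: "'a set \<Rightarrow> 'a set set \<Rightarrow> bool" where
  "graph V E \<longleftrightarrow> finite V \<and> (\<forall>e\<in>E. e \<subseteq> V \<and> card e = 2)"

definition adj :: "'a set set \<Rightarrow> 'a \<Rightarrow> 'a \<Rightarrow> bool" where
  "adj E v w \<longleftrightarrow> {v, w} \<in> E"

definition deg :: "'a set set \<Rightarrow> 'a \<Rightarrow> nat" where
  "deg E v = card {e \<in> E. v \<in> e}"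

definition walk :: "'a set set \<Rightarrow> 'a list \<Rightarrow> bool" where
  "walk E xs \<longleftrightarrow> xs \<noteq> [] \<and> (\<forall>i. Suc i < length xs \<longrightarrow> adj E (xs ! i) (xs ! Suc i))"

definition connected_graph :: "'a set \<Rightarrow> 'a set set \<Rightarrow> bool" where
  "connected_graph V E \<longleftrightarrow>
     (\<forall>v\<in>V. \<forall>w\<in>V. \<exists>xs. walk E xs \<and> hd xs = v \<and> last xs = w)"

definition has_cycle :: "'a set set \<Rightarrow> bool" where
  "has_cycle E \<longleftrightarrow> (\<exists>xs. length xs \<ge> 3 \<and> distinct xs \<and> walk E xs \<and> adj E (last xs) (hd xs))"

definition is_tree :: "'a set \<Rightarrow> 'a set set \<Rightarrow> bool" where
  "is_tree V E \<longleftrightarrow> graph V E \<and> V \<noteq> {} \<and> connected_graph V E \<and> \<not> has_cycle E"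

definition boundary :: "'a set \<Rightarrow> 'a set set \<Rightarrow> 'a set" where
  "boundary V E = {v \<in> V. deg E v = 1}"

definition interior :: "'a set \<Rightarrow> 'a set set \<Rightarrow> 'a set" where
  "interior V E = {v \<in> V. deg E v \<ge> 2}"

definition tree_with_boundary :: "'a set \<Rightarrow> 'a set set \<Rightarrow> bool" where
  "tree_with_boundary V E \<longleftrightarrow> is_tree V E \<and> V = boundary V E \<union> interior V E
     \<and> boundary V E \<noteq> {} \<and> interior V E \<noteq> {}"

definition deg_seq :: "'a set \<Rightarrow> 'a set set \<Rightarrow> nat list" where
  "deg_seq V E = sorted_list_of_multiset (image_mset (deg E) (mset_set (interior V E)))
                  @ replicate (card (boundary V E)) 1"

definition maj_le :: "nat list \<Rightarrow> nat list \<Rightarrow> bool" where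
  "maj_le p q \<longleftrightarrow> length p = length q \<and>
     (\<forall>r < length p. sum_list (take (Suc r) p) \<le> sum_list (take (Suc r) q))"

text \<open>Dirichlet operator Delta_0 (principal submatrix of D - A indexed by the interior)
  acting on real functions on the interior.\<close>
definition dirichlet_op :: "'a set \<Rightarrow> 'a set set \<Rightarrow> ('a \<Rightarrow> real) \<Rightarrow> 'a \<Rightarrow> real" where
  "dirichlet_op V E x v =
     real (deg E v) * x v - (\<Sum>w \<in> {w \<in> interior V E. adj E v w}. x w)"

definition dirichlet_eigenvalues :: "'a set \<Rightarrow> 'a set set \<Rightarrow> real set" where
  "dirichlet_eigenvalues V E = {\<mu>. \<exists>x. (\<exists>v \<in> interior V E. x v \<noteq> 0) \<and>
      (\<forall>v \<in> interior V E. dirichlet_op V E x v = \<mu> * x v)}"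

definition lambda_D :: "'a set \<Rightarrow> 'a set set \<Rightarrow> real" where
  "lambda_D V E = Min (dirichlet_eigenvalues V E)"

definition gdist :: "'a set set \<Rightarrow> 'a \<Rightarrow> 'a \<Rightarrow> nat" where
  "gdist E v w = (LEAST n. \<exists>xs. walk E xs \<and> hd xs = v \<and> last xs = w \<and> length xs = Suc n)"

definition child :: "'a set set \<Rightarrow> 'a \<Rightarrow> 'a \<Rightarrow> 'a \<Rightarrow> bool" where
  "child E v0 v w \<longleftrightarrow> adj E v w \<and> gdist E w v0 = Suc (gdist E v v0)"

text \<open>SLO*-ordering for root v0: the total order on V is given by an injective rank
  function f, with v \<prec> w iff f v < f w.\<close>
definition SLO_ordering :: "'a set \<Rightarrow> 'a set set \<Rightarrow> 'a \<Rightarrow> ('a \<Rightarrow> nat) \<Rightarrow> bool" where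
  "SLO_ordering V E v0 f \<longleftrightarrow> v0 \<in> V \<and> inj_on f V \<and>
    (\<forall>v\<in>V. \<forall>w\<in>V. f v < f w \<longrightarrow> gdist E v v0 \<le> gdist E w v0) \<and>
    (\<forall>v1\<in>V. \<forall>v2\<in>V. f v1 < f v2 \<longrightarrow>
        (\<forall>w1\<in>V. \<forall>w2\<in>V. child E v0 v1 w1 \<longrightarrow> child E v0 v2 w2 \<longrightarrow> f w1 < f w2)) \<and>
    (\<forall>v\<in>V. \<forall>w\<in>V. f v < f w \<longrightarrow> v \<in> boundary V E \<longrightarrow> w \<in> boundary V E) \<and>
    (\<forall>v\<in>interior V E. \<forall>w\<in>interior V E. f v < f w \<longrightarrow> deg E v \<le> deg E w)"

definition SLO_tree :: "'a set \<Rightarrow> 'a set set \<Rightarrow> bool" where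
  "SLO_tree V E \<longleftrightarrow> tree_with_boundary V E \<and> (\<exists>v0 f. SLO_ordering V E v0 f)"

end

theory Submission
  imports Defs "HOL-Analysis.Analysis" "HOL-Library.Function_Algebras"
begin

text \<open>Let \<open>f \<ge> 0\<close> be the absolute value of a Dirichlet eigenfunction of \<open>G\<close> for \<open>\<lambda>(G)\<close>, so
  its Rayleigh quotient is at most \<open>\<lambda>(G)\<close>, and list the vertices as \<open>v\<^sub>0, \<dots>, v\<^sub>n\<^sub>-\<^sub>1\<close> by
  decreasing \<open>f\<close>. Build on this list the breadth-first (greedy) tree \<open>G\<^sup>*\<close> with degree sequence
  \<open>\<pi>'\<close>: it is an SLO*-tree. Writing each \<open>(f v\<^sub>i - f v\<^sub>j)\<^sup>2\<close> as a telescoping sum over the cuts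
  between \<open>{v\<^sub>0, \<dots>, v\<^sub>m\<^sub>-\<^sub>1}\<close> and the rest, both Dirichlet forms become nonnegative combinations of
  the weights of edges crossing each cut. Across a cut with \<open>f v\<^sub>m < f v\<^sub>m\<^sub>-\<^sub>1\<close>, the first \<open>m\<close>
  vertices are interior in \<open>G\<close>; the forest bound and \<open>\<pi>' \<unlhd> \<pi>\<close> give them at least as many outer
  neighbours in \<open>G\<close> as in \<open>G\<^sup>*\<close>, whose crossing edges go to the earliest possible vertices, where
  the weights are smallest. Hence the Dirichlet form of \<open>f\<close> on \<open>G\<^sup>*\<close> is at most that on \<open>G\<close>,
  and the Rayleigh characterisation of \<open>\<lambda>(G\<^sup>*)\<close> concludes.\<close>

section \<open>Walks and distances\<close>

lemma adj_commute: "adj E v w = adj E w v"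
  by (simp add: adj_def insert_commute)

lemma adj_imp_vertices: "graph V E \<Longrightarrow> adj E v w \<Longrightarrow> v \<in> V \<and> w \<in> V \<and> v \<noteq> w"
proof -
  assume "graph V E" "adj E v w"
  then have "{v,w} \<subseteq> V" "card {v,w} = 2" by (auto simp: graph_def adj_def)
  then show ?thesis by (cases "v = w") auto
qed

lemma walk_single [simp]: "walk E [v]"
  by (simp add: walk_def)

lemma walk_Cons: "walk E (v # xs) \<longleftrightarrow> xs = [] \<or> (walk E xs \<and> adj E v (hd xs))"
proof
  assume w: "walk E (v # xs)"
  show "xs = [] \<or> (walk E xs \<and> adj E v (hd xs))"
  proof (cases xs)
    case (Cons y ys)
    have "adj E v (hd xs)"
      using w[unfolded walk_def, THEN conjunct2, rule_format, of 0] Cons by simp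
    moreover have "walk E xs"
      unfolding walk_def
      using Cons w[unfolded walk_def, THEN conjunct2, rule_format, of "Suc _"] by auto
    ultimately show ?thesis by simp
  qed simp
next
  assume a: "xs = [] \<or> (walk E xs \<and> adj E v (hd xs))"
  show "walk E (v # xs)" unfolding walk_def
  proof (intro conjI allI impI)
    fix i assume i: "Suc i < length (v # xs)"
    show "adj E ((v # xs) ! i) ((v # xs) ! Suc i)"
    proof (cases i)
      case 0 then show ?thesis using a i by (cases xs) auto
    next
      case (Suc j) then show ?thesis using a i unfolding walk_def by auto
    qed
  qed simp
qed

lemma walk_append:
  "walk E xs \<Longrightarrow> walk E ys \<Longrightarrow> adj E (last xs) (hd ys) \<Longrightarrow> walk E (xs @ ys)"
proof (induction xs)
  case (Cons x xs)
  then show ?case by (cases xs) (auto simp: walk_Cons)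
qed (simp add: walk_def)

lemma walk_rev: "walk E xs \<Longrightarrow> walk E (rev xs)"
proof (induction xs)
  case (Cons x xs)
  show ?case
  proof (cases xs)
    case (Cons y zs)
    then have "walk E (rev xs)" "adj E x (hd xs)" using Cons.prems Cons.IH by (auto simp: walk_Cons)
    then have "walk E (rev xs @ [x])"
      using Cons by (intro walk_append) (auto simp: adj_commute last_rev)
    then show ?thesis by simp
  qed simp
qed (simp add: walk_def)

lemma walk_join:
  assumes "walk E xs" "walk E ys" "last xs = hd ys"
  shows "walk E (xs @ tl ys) \<and> hd (xs @ tl ys) = hd xs \<and> last (xs @ tl ys) = last ys"
proof (cases "tl ys = []")
  case True
  then have "ys = [hd ys]" using assms(2) unfolding walk_def by (cases ys) auto
  then show ?thesis using assms True by (metis append_Nil2 last_ConsL)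
next
  case False
  then obtain y z zs where ys: "ys = y # z # zs"
    by (cases ys; cases "tl ys") auto
  have "walk E (z # zs)" "adj E y z" using assms(2) ys by (auto simp: walk_Cons)
  then have "walk E (xs @ (z # zs))" using assms(1,3) ys by (intro walk_append) auto
  moreover have "xs \<noteq> []" using assms(1) unfolding walk_def by simp
  ultimately show ?thesis using ys by simp
qed

text \<open>On a cycle, the vertex of largest rank has two distinct neighbours of lower rank.\<close>

lemma not_has_cycle_if_unique_lower_neighbour:
  fixes rank :: "'a \<Rightarrow> nat"
  assumes adj_rank_neq: "\<And>v w. adj E v w \<Longrightarrow> rank v \<noteq> rank w"
    and unique_lower: "\<And>v w w'. adj E v w \<Longrightarrow> adj E v w' \<Longrightarrow> rank w < rank v \<Longrightarrow> rank w' < rank v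
      \<Longrightarrow> w = w'"
  shows "\<not> has_cycle E"
proof
  assume "has_cycle E"
  then obtain xs where xs: "3 \<le> length xs" "distinct xs" "walk E xs" "adj E (last xs) (hd xs)"
    unfolding has_cycle_def by blast
  define L where "L = length xs"
  define nx where "nx k = (if k = L - 1 then 0 else Suc k)" for k
  have cyc: "adj E (xs ! k) (xs ! nx k)" if k: "k < L" for k
  proof (cases "k = L - 1")
    case True
    moreover have "xs \<noteq> []" using xs(1) by auto
    ultimately have "xs ! k = last xs" "xs ! nx k = hd xs"
      unfolding nx_def L_def by (simp_all add: last_conv_nth hd_conv_nth)
    then show ?thesis using xs(4) by simp
  next
    case False
    then show ?thesis using xs(3) k unfolding walk_def nx_def L_def by simp
  qed
  have L3: "3 \<le> L" using xs(1) unfolding L_def .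
  define M where "M = Max ((\<lambda>k. rank (xs ! k)) ` {..<L})"
  have "M \<in> (\<lambda>k. rank (xs ! k)) ` {..<L}"
    unfolding M_def using L3 by (intro Max_in) (auto simp: lessThan_empty_iff)
  then obtain i where i: "i < L" "rank (xs ! i) = M" by auto
  have max: "rank (xs ! k) \<le> rank (xs ! i)" if "k < L" for k
    unfolding i(2) M_def using that by (intro Max_ge) auto
  define k1 where "k1 = nx i"
  define k2 where "k2 = (if i = 0 then L - 1 else i - 1)"
  have k1: "k1 < L" unfolding k1_def nx_def using i(1) L3 by auto
  have k2: "k2 < L" "nx k2 = i" unfolding k2_def nx_def using i(1) L3 by auto
  have "k1 \<noteq> k2" unfolding k1_def k2_def nx_def using i(1) L3 by auto
  then have neq: "xs ! k1 \<noteq> xs ! k2"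
    using k1 k2(1) xs(2) unfolding L_def by (simp add: nth_eq_iff_index_eq)
  have a1: "adj E (xs ! i) (xs ! k1)" using cyc[OF i(1)] unfolding k1_def .
  have a2: "adj E (xs ! i) (xs ! k2)" using cyc[OF k2(1)] k2(2) adj_commute by metis
  have "rank (xs ! k1) < rank (xs ! i)" "rank (xs ! k2) < rank (xs ! i)"
    using max[OF k1] max[OF k2(1)] adj_rank_neq[OF a1] adj_rank_neq[OF a2] by auto
  then show False using unique_lower[OF a1 a2] neq by blast
qed

locale conn_graph =
  fixes V :: "'a set" and E :: "'a set set"
  assumes graph: "graph V E" and connected: "connected_graph V E"
begin

lemma gdist_walk:
  assumes "v \<in> V" "w \<in> V"
  shows "\<exists>xs. walk E xs \<and> hd xs = v \<and> last xs = w \<and> length xs = Suc (gdist E v w)"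
proof -
  obtain xs where xs: "walk E xs" "hd xs = v" "last xs = w"
    using connected assms unfolding connected_graph_def by blast
  then have "length xs = Suc (length xs - 1)" by (cases xs) (auto simp: walk_def)
  then have "\<exists>n xs. walk E xs \<and> hd xs = v \<and> last xs = w \<and> length xs = Suc n" using xs by blast
  from LeastI_ex[OF this] show ?thesis unfolding gdist_def .
qed

lemma gdist_le_walk:
  assumes "walk E xs" "hd xs = v" "last xs = w"
  shows "gdist E v w \<le> length xs - 1"
proof -
  have "length xs = Suc (length xs - 1)" using assms by (cases xs) (auto simp: walk_def)
  then show ?thesis unfolding gdist_def using assms by (intro Least_le) blast
qed

lemma gdist_adj_le:
  assumes "adj E x y" "r \<in> V"
  shows "gdist E x r \<le> Suc (gdist E y r)"
proof -
  obtain ys where ys: "walk E ys" "hd ys = y" "last ys = r" "length ys = Suc (gdist E y r)"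
    using gdist_walk adj_imp_vertices[OF graph assms(1)] assms(2) by blast
  then have "walk E (x # ys)" using assms by (auto simp: walk_Cons)
  then have "gdist E x r \<le> length (x # ys) - 1"
    by (rule gdist_le_walk) (use ys in \<open>auto simp: last_ConsR\<close>)
  then show ?thesis using ys by simp
qed

lemma gdist_eq_0_iff:
  assumes "v \<in> V" "r \<in> V"
  shows "gdist E v r = 0 \<longleftrightarrow> v = r"
proof
  assume "gdist E v r = 0"
  then obtain xs where "walk E xs" "hd xs = v" "last xs = r" "length xs = 1"
    using gdist_walk[OF assms] by auto
  then show "v = r" by (cases xs) auto
qed (use gdist_le_walk[of "[v]" v] in simp)

lemma gdist_step:
  assumes "v \<in> V" "r \<in> V" "v \<noteq> r"
  shows "\<exists>y. adj E v y \<and> Suc (gdist E y r) = gdist E v r"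
proof -
  obtain xs where xs: "walk E xs" "hd xs = v" "last xs = r" "length xs = Suc (gdist E v r)"
    using gdist_walk[OF assms(1,2)] by blast
  then obtain y ys where xy: "xs = v # y # ys"
    using assms(3) by (cases xs; cases "tl xs") auto
  have a: "adj E v y" "walk E (y # ys)" using xs(1) xy by (auto simp: walk_Cons)
  have "gdist E y r \<le> length (y # ys) - 1" by (rule gdist_le_walk[OF a(2)]) (use xs(3) xy in auto)
  then have "Suc (gdist E y r) \<le> gdist E v r" using xs xy by simp
  moreover have "gdist E v r \<le> Suc (gdist E y r)" using gdist_adj_le[OF a(1) assms(2)] .
  ultimately show ?thesis using a by (intro exI[of _ y]) auto
qed

end

lemma graph_finite_edges: "graph V E \<Longrightarrow> finite E"
  unfolding graph_def by (meson Pow_iff finite_Pow_iff rev_finite_subset subsetI)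

lemma graph_edge_doubleton:
  "graph V E \<Longrightarrow> e \<in> E \<Longrightarrow> \<exists>x y. e = {x,y} \<and> x \<noteq> y \<and> x \<in> V \<and> y \<in> V"
  unfolding graph_def by (metis card_2_iff insert_subset)

lemma deg_eq_card_adj:
  assumes g: "graph V E" and v: "v \<in> V"
  shows "deg E v = card {w \<in> V. adj E v w}"
proof -
  have "bij_betw (\<lambda>w. {v,w}) {w \<in> V. adj E v w} {e \<in> E. v \<in> e}"
  proof (rule bij_betwI')
    fix e assume e: "e \<in> {e \<in> E. v \<in> e}"
    then obtain x y where xy: "e = {x,y}" "x \<noteq> y" "x \<in> V" "y \<in> V"
      using graph_edge_doubleton[OF g] by blast
    then show "\<exists>w\<in>{w \<in> V. adj E v w}. e = {v, w}"
      using e by (cases "v = x") (auto simp: adj_def insert_commute)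
  qed (auto simp: adj_def doubleton_eq_iff)
  then show ?thesis unfolding deg_def by (simp add: bij_betw_same_card)
qed

lemma sum_deg_eq_sum_edges:
  assumes g: "graph V E" and T: "T \<subseteq> V"
  shows "(\<Sum>v\<in>T. deg E v) = (\<Sum>e\<in>E. card (e \<inter> T))"
proof -
  have fE: "finite E" using graph_finite_edges[OF g] .
  have fT: "finite T" using T g finite_subset unfolding graph_def by blast
  have "(\<Sum>v\<in>T. deg E v) = (\<Sum>v\<in>T. \<Sum>e\<in>E. if v \<in> e then 1 else 0)"
    unfolding deg_def by (intro sum.cong refl) (simp add: sum.inter_filter[OF fE, symmetric])
  also have "\<dots> = (\<Sum>e\<in>E. \<Sum>v\<in>T. if v \<in> e then 1 else 0)" by (rule sum.swap)
  also have "\<dots> = (\<Sum>e\<in>E. card (e \<inter> T))"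
    by (intro sum.cong refl) (simp add: sum.inter_filter[OF fT, symmetric] Int_def conj_commute)
  finally show ?thesis .
qed

lemma sum_deg_eq_twice_card_edges:
  assumes g: "graph V E"
  shows "(\<Sum>v\<in>V. deg E v) = 2 * card E"
proof -
  have "(\<Sum>v\<in>V. deg E v) = (\<Sum>e\<in>E. card (e \<inter> V))" using sum_deg_eq_sum_edges[OF g] by simp
  also have "\<dots> = (\<Sum>e\<in>E. 2)"
    using g unfolding graph_def by (intro sum.cong refl) (metis inf.absorb1)
  finally show ?thesis by simp
qed

section \<open>Rooted trees\<close>

locale rooted_tree = conn_graph +
  fixes r :: 'a
  assumes acyclic: "\<not> has_cycle E" and root_in_V: "r \<in> V"
begin

definition height where "height v = gdist E v r"
definition parent where "parent v = (SOME y. adj E v y \<and> Suc (height y) = height v)"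
definition ancestor where "ancestor s v = (parent ^^ s) v"

lemma finite_V: "finite V"
  using graph unfolding graph_def by simp

lemma height_adj_le: "adj E x y \<Longrightarrow> height x \<le> Suc (height y)"
  unfolding height_def using gdist_adj_le root_in_V by blast

lemma height_eq_0_iff: "v \<in> V \<Longrightarrow> height v = 0 \<longleftrightarrow> v = r"
  unfolding height_def by (simp add: gdist_eq_0_iff root_in_V)

lemma height_root [simp]: "height r = 0"
  using height_eq_0_iff root_in_V by simp

lemma parent:
  assumes "v \<in> V" "v \<noteq> r"
  shows "adj E v (parent v)" "Suc (height (parent v)) = height v"
proof -
  have "\<exists>y. adj E v y \<and> Suc (height y) = height v"
    using gdist_step[OF assms(1) root_in_V assms(2)] unfolding height_def .
  from someI_ex[OF this] show "adj E v (parent v)" "Suc (height (parent v)) = height v"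
    unfolding parent_def by auto
qed

lemma parent_in_V: "v \<in> V \<Longrightarrow> v \<noteq> r \<Longrightarrow> parent v \<in> V"
  using parent(1) adj_imp_vertices[OF graph] by metis

lemma ancestor_0 [simp]: "ancestor 0 v = v"
  by (simp add: ancestor_def)

lemma ancestor_Suc: "ancestor (Suc s) v = parent (ancestor s v)"
  by (simp add: ancestor_def)

lemma ancestor_height:
  assumes "v \<in> V" "s \<le> height v"
  shows "ancestor s v \<in> V \<and> height (ancestor s v) = height v - s"
  using assms(2)
proof (induction s)
  case (Suc s)
  then have a: "ancestor s v \<in> V" "height (ancestor s v) = height v - s" by auto
  then have "ancestor s v \<noteq> r" using Suc.prems height_eq_0_iff by auto
  then show ?case using a parent[of "ancestor s v"] parent_in_V[of "ancestor s v"]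
    by (simp add: ancestor_Suc)
qed (use assms in simp)

lemma adj_ancestor_Suc:
  assumes "v \<in> V" "s < height v"
  shows "adj E (ancestor s v) (ancestor (Suc s) v)"
proof -
  have a: "ancestor s v \<in> V" "height (ancestor s v) = height v - s"
    using ancestor_height[OF assms(1), of s] assms by auto
  then have "ancestor s v \<noteq> r" using assms height_eq_0_iff by auto
  then show ?thesis using parent(1)[OF a(1)] by (simp add: ancestor_Suc)
qed

lemma ancestor_height_eq_root: "v \<in> V \<Longrightarrow> ancestor (height v) v = r"
  using ancestor_height[of v "height v"] height_eq_0_iff by auto

lemma walk_ancestors:
  assumes "v \<in> V" "t \<le> height v"
  shows "walk E (map (\<lambda>s. ancestor s v) [0..<Suc t])"
proof (rule walk_def[THEN iffD2, OF conjI])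
  show "\<forall>i. Suc i < length (map (\<lambda>s. ancestor s v) [0..<Suc t]) \<longrightarrow>
      adj E (map (\<lambda>s. ancestor s v) [0..<Suc t] ! i) (map (\<lambda>s. ancestor s v) [0..<Suc t] ! Suc i)"
    using adj_ancestor_Suc[OF assms(1)] assms(2) by (simp del: upt_Suc)
qed (simp del: upt_Suc)

lemma distinct_ancestors:
  assumes "v \<in> V" "t \<le> height v"
  shows "distinct (map (\<lambda>s. ancestor s v) [0..<Suc t])"
proof -
  have "inj_on (\<lambda>s. ancestor s v) {0..<Suc t}"
  proof (rule inj_onI)
    fix i j assume "i \<in> {0..<Suc t}" "j \<in> {0..<Suc t}" "ancestor i v = ancestor j v"
    then show "i = j"
      using ancestor_height[OF assms(1), of i] ancestor_height[OF assms(1), of j] assms(2) by auto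
  qed
  then show ?thesis by (simp add: distinct_map del: upt_Suc)
qed

text \<open>Go up from both vertices to their lowest common ancestor.\<close>

lemma path_between_same_height:
  assumes u: "u \<in> V" and v: "v \<in> V" and uv: "u \<noteq> v" and huv: "height u = height v"
  shows "\<exists>xs. walk E xs \<and> distinct xs \<and> hd xs = u \<and> last xs = v \<and> 3 \<le> length xs
           \<and> (\<forall>z\<in>set xs. height z \<le> height u)"
proof -
  have ex: "\<exists>t. ancestor t u = ancestor t v"
    using ancestor_height_eq_root[OF u] ancestor_height_eq_root[OF v] huv by metis
  define t where "t = (LEAST t. ancestor t u = ancestor t v)"
  have tm: "ancestor t u = ancestor t v" unfolding t_def by (rule LeastI_ex[OF ex])
  have tle: "t \<le> height u" unfolding t_def
    using ancestor_height_eq_root[OF u] ancestor_height_eq_root[OF v] huv by (intro Least_le) simp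
  have t0: "t \<noteq> 0" using tm uv by (cases "t = 0") auto
  have lt: "\<And>s. s < t \<Longrightarrow> ancestor s u \<noteq> ancestor s v" unfolding t_def using not_less_Least by blast
  define A where "A = map (\<lambda>s. ancestor s u) [0..<Suc t]"
  define B where "B = map (\<lambda>s. ancestor s v) [0..<Suc (t - 1)]"
  have tt: "Suc (t - 1) = t" using t0 by simp
  have wA: "walk E A" unfolding A_def using walk_ancestors[OF u tle] .
  have wB: "walk E B" unfolding B_def using walk_ancestors[OF v, of "t - 1"] tle huv by simp
  have dA: "distinct A" unfolding A_def using distinct_ancestors[OF u tle] .
  have dB: "distinct B" unfolding B_def using distinct_ancestors[OF v, of "t - 1"] tle huv by simp
  have lastA: "last A = ancestor t u" unfolding A_def by simp
  have lastB: "last B = ancestor (t - 1) v" unfolding B_def by simp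
  have adj_AB: "adj E (last A) (hd (rev B))"
    using adj_ancestor_Suc[OF v, of "t - 1"] tle huv t0 tt tm lastA lastB
    by (simp add: hd_rev adj_commute)
  have disj: "set A \<inter> set B = {}"
  proof (rule ccontr)
    assume "set A \<inter> set B \<noteq> {}"
    then obtain i j where ij: "i \<le> t" "j < t" "ancestor i u = ancestor j v"
      unfolding A_def B_def using tt by (auto simp del: upt_Suc simp: less_Suc_eq_le)
    then have "height u - i = height v - j"
      using ancestor_height[OF u, of i] ancestor_height[OF v, of j] tle huv by auto
    then have "i = j" using ij tle huv by auto
    then show False using lt ij by auto
  qed
  define xs where "xs = A @ rev B"
  have "walk E xs" unfolding xs_def by (rule walk_append[OF wA walk_rev[OF wB] adj_AB])
  moreover have "distinct xs" unfolding xs_def using dA dB disj by auto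
  moreover have "hd xs = u" unfolding xs_def A_def by (simp del: upt_Suc add: hd_map)
  moreover have "last xs = v" unfolding xs_def B_def by (simp del: upt_Suc add: last_rev hd_map)
  moreover have "3 \<le> length xs" unfolding xs_def A_def B_def using t0 tt by simp
  moreover have "\<forall>z\<in>set xs. height z \<le> height u"
  proof
    fix z assume "z \<in> set xs"
    then have "(\<exists>s\<le>t. z = ancestor s u) \<or> (\<exists>s<t. z = ancestor s v)"
      unfolding xs_def A_def B_def using tt by (simp del: upt_Suc add: image_iff)
        (metis atLeastLessThan_iff less_Suc_eq_le)
    then show "height z \<le> height u"
      using ancestor_height[OF u] ancestor_height[OF v] tle huv by fastforce
  qed
  ultimately show ?thesis by blast
qed

lemma adj_height_neq:
  assumes "adj E u v"
  shows "height u \<noteq> height v"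
proof
  assume huv: "height u = height v"
  have uv: "u \<in> V" "v \<in> V" "u \<noteq> v" using adj_imp_vertices[OF graph assms] by auto
  obtain xs where xs: "walk E xs" "distinct xs" "hd xs = u" "last xs = v" "3 \<le> length xs"
    using path_between_same_height[OF uv huv] by blast
  have "has_cycle E" unfolding has_cycle_def using xs assms adj_commute by metis
  then show False using acyclic by simp
qed

lemma unique_lower_neighbour:
  assumes "adj E x y1" "adj E x y2" "height y1 = height y2" "Suc (height y1) = height x"
  shows "y1 = y2"
proof (rule ccontr)
  assume ne: "y1 \<noteq> y2"
  have V: "y1 \<in> V" "y2 \<in> V" using adj_imp_vertices[OF graph] assms(1,2) by auto
  obtain xs where xs: "walk E xs" "distinct xs" "hd xs = y1" "last xs = y2" "3 \<le> length xs"
    "\<forall>z\<in>set xs. height z \<le> height y1"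
    using path_between_same_height[OF V ne assms(3)] by blast
  have "x \<notin> set xs" using xs(6) assms(4) by fastforce
  moreover have "walk E (x # xs)" using xs assms(1) by (auto simp: walk_Cons)
  moreover have "adj E (last (x # xs)) (hd (x # xs))"
    using xs assms(2) by (cases xs) (auto simp: adj_commute)
  ultimately have "has_cycle E" unfolding has_cycle_def using xs by (intro exI[of _ "x # xs"]) auto
  then show False using acyclic by simp
qed

lemma adj_parent_cases:
  assumes "adj E x y"
  shows "(x \<noteq> r \<and> y = parent x \<and> height x = Suc (height y))
       \<or> (y \<noteq> r \<and> x = parent y \<and> height y = Suc (height x))"
proof -
  have V: "x \<in> V" "y \<in> V" using adj_imp_vertices[OF graph assms] by auto
  have yx: "adj E y x" using assms adj_commute by metis
  have a: "height x \<le> Suc (height y)" "height y \<le> Suc (height x)" "height x \<noteq> height y"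
    using height_adj_le[OF assms] height_adj_le[OF yx] adj_height_neq[OF assms] by auto
  show ?thesis
  proof (cases "height x = Suc (height y)")
    case True
    then have "x \<noteq> r" using height_eq_0_iff[OF V(1)] by auto
    have p: "adj E x (parent x)" "Suc (height (parent x)) = height x"
      using parent[OF V(1) \<open>x \<noteq> r\<close>] by auto
    have "y = parent x" by (rule unique_lower_neighbour[OF assms p(1)]) (use p(2) True in auto)
    then show ?thesis using True \<open>x \<noteq> r\<close> by auto
  next
    case False
    then have hy: "height y = Suc (height x)" using a by auto
    then have "y \<noteq> r" using height_eq_0_iff[OF V(2)] by auto
    have p: "adj E y (parent y)" "Suc (height (parent y)) = height y"
      using parent[OF V(2) \<open>y \<noteq> r\<close>] by auto
    have "x = parent y" by (rule unique_lower_neighbour[OF yx p(1)]) (use p(2) hy in auto)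
    then show ?thesis using hy \<open>y \<noteq> r\<close> by auto
  qed
qed

lemma edges_eq_parent_edges: "E = (\<lambda>w. {w, parent w}) ` (V - {r})"
proof
  show "E \<subseteq> (\<lambda>w. {w, parent w}) ` (V - {r})"
  proof
    fix e assume "e \<in> E"
    then obtain x y where xy: "e = {x,y}" "x \<in> V" "y \<in> V" "adj E x y"
      using graph_edge_doubleton[OF graph] unfolding adj_def by blast
    from adj_parent_cases[OF xy(4)] show "e \<in> (\<lambda>w. {w, parent w}) ` (V - {r})"
      using xy by (auto simp: insert_commute)
  qed
qed (use parent(1) in \<open>auto simp: adj_def\<close>)

lemma card_edges: "card E = card V - 1"
proof -
  have "inj_on (\<lambda>w. {w, parent w}) (V - {r})"
  proof (rule inj_onI)
    fix w w' assume w: "w \<in> V - {r}" "w' \<in> V - {r}" "{w, parent w} = {w', parent w'}"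
    show "w = w'"
    proof (rule ccontr)
      assume "w \<noteq> w'"
      then have "w = parent w'" "w' = parent w" using w(3) by (auto simp: doubleton_eq_iff)
      then show False using parent(2)[of w] parent(2)[of w'] w by auto
    qed
  qed
  then have "card E = card (V - {r})" by (subst edges_eq_parent_edges) (rule card_image)
  then show ?thesis using root_in_V finite_V by simp
qed

lemma sum_deg: "(\<Sum>v\<in>V. deg E v) = 2 * (card V - 1)"
  using sum_deg_eq_twice_card_edges[OF graph] card_edges by simp

text \<open>Each edge is \<open>{w, parent w}\<close> for a unique lower endpoint \<open>w\<close>; in a nonempty vertex set the
  vertex of least height is the lower endpoint of no edge inside it.\<close>

lemma card_edges_within_le:
  assumes W: "W \<subseteq> V" "W \<noteq> {}" and F: "F \<subseteq> E" and FW: "\<And>e. e \<in> F \<Longrightarrow> e \<subseteq> W"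
  shows "card F + 1 \<le> card W"
proof -
  define lower where "lower e = (SOME w. w \<in> V - {r} \<and> e = {w, parent w})" for e
  have lower: "lower e \<in> V - {r} \<and> e = {lower e, parent (lower e)}" if "e \<in> E" for e
    unfolding lower_def by (rule someI_ex) (use that edges_eq_parent_edges in auto)
  have fW: "finite W" using W finite_V finite_subset by blast
  obtain z where z: "z \<in> W" "\<And>w. w \<in> W \<Longrightarrow> height z \<le> height w"
    using ex_has_least_nat[of "\<lambda>w. w \<in> W" _ height] W by blast
  have "lower ` F \<subseteq> W - {z}"
  proof
    fix w assume "w \<in> lower ` F"
    then obtain e where e: "e \<in> F" "w = lower e" by blast
    then have c: "w \<in> V - {r}" "e = {w, parent w}" using lower F by auto
    then have "w \<in> W" "parent w \<in> W" using FW[OF e(1)] by auto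
    moreover have "w \<noteq> z" using z(2)[OF \<open>parent w \<in> W\<close>] parent(2)[of w] c by auto
    ultimately show "w \<in> W - {z}" by simp
  qed
  then have "card (lower ` F) \<le> card (W - {z})" using fW by (intro card_mono) auto
  moreover have "inj_on lower F" using F by (intro inj_onI) (metis lower subsetD)
  then have "card (lower ` F) = card F" by (simp add: card_image)
  moreover have "card (W - {z}) + 1 = card W"
    using z(1) fW by (metis Suc_eq_plus1 card_Suc_Diff1)
  ultimately show ?thesis by simp
qed

text \<open>The edges meeting \<open>T\<close> form a forest on \<open>T\<close> and its outer neighbours, and the edges
  inside \<open>T\<close> a forest on \<open>T\<close>; each is counted by \<open>card_edges_within_le\<close>.\<close>

lemma sum_deg_le_outer_neighbours:
  assumes T: "T \<subseteq> V" "T \<noteq> {}"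
  shows "(\<Sum>v\<in>T. deg E v) + 2 \<le> 2 * card T + card {y \<in> V - T. \<exists>t\<in>T. adj E t y}"
proof -
  define N where "N = {y \<in> V - T. \<exists>t\<in>T. adj E t y}"
  have fE: "finite E" using graph_finite_edges[OF graph] .
  have fT: "finite T" using T finite_V finite_subset by blast
  have fN: "finite N" unfolding N_def using finite_V by simp
  define Meet where "Meet = {e \<in> E. e \<inter> T \<noteq> {}}"
  define Inside where "Inside = {e \<in> E. e \<subseteq> T}"
  have "(\<Sum>v\<in>T. deg E v) = (\<Sum>e\<in>E. card (e \<inter> T))" using sum_deg_eq_sum_edges[OF graph T(1)] .
  also have "\<dots> = (\<Sum>e\<in>E. (if e \<inter> T \<noteq> {} then 1 else 0) + (if e \<subseteq> T then 1 else 0))"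
  proof (intro sum.cong refl)
    fix e assume "e \<in> E"
    then obtain x y where xy: "e = {x,y}" "x \<noteq> y" using graph_edge_doubleton[OF graph] by blast
    show "card (e \<inter> T) = (if e \<inter> T \<noteq> {} then 1 else 0) + (if e \<subseteq> T then 1 else 0)"
      using xy by (cases "x \<in> T"; cases "y \<in> T") (auto simp: Int_insert_left)
  qed
  also have "\<dots> = card Meet + card Inside"
    unfolding Meet_def Inside_def sum.distrib by (simp add: sum.inter_filter[OF fE, symmetric])
  finally have s: "(\<Sum>v\<in>T. deg E v) = card Meet + card Inside" .
  have "card Meet + 1 \<le> card (T \<union> N)"
  proof (rule card_edges_within_le)
    show "T \<union> N \<subseteq> V" "T \<union> N \<noteq> {}" using T unfolding N_def by auto
    show "Meet \<subseteq> E" unfolding Meet_def by auto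
    fix e assume "e \<in> Meet"
    then obtain x y where xy: "e = {x,y}" "x \<in> V" "y \<in> V" "e \<in> E" "e \<inter> T \<noteq> {}"
      unfolding Meet_def using graph_edge_doubleton[OF graph] by blast
    then have "adj E x y" "adj E y x" by (auto simp: adj_def insert_commute)
    then show "e \<subseteq> T \<union> N" using xy unfolding N_def by auto
  qed
  moreover have "card Inside + 1 \<le> card T"
    by (rule card_edges_within_le) (use T in \<open>auto simp: Inside_def\<close>)
  moreover have "card (T \<union> N) = card T + card N"
    using fT fN by (intro card_Un_disjoint) (auto simp: N_def)
  ultimately show ?thesis using s unfolding N_def by linarith
qed

end

section \<open>The Dirichlet operator and the Rayleigh quotient\<close>

interpretation fun_vs: vector_space "(\<lambda>c (f::'x \<Rightarrow> real) y. c * f y)"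
  by unfold_locales (auto simp: fun_eq_iff algebra_simps)

lemma sum_fun_apply: "finite A \<Longrightarrow> (sum F A) z = (\<Sum>a\<in>A. F a z)"
  for F :: "'b \<Rightarrow> 'x \<Rightarrow> real"
  by (induction A rule: finite_induct) (auto simp: plus_fun_def zero_fun_def)

lemma orthogonal_family_independent:
  fixes F :: "('a \<Rightarrow> real) set"
  assumes orth: "\<forall>f\<in>F. \<forall>g\<in>F. f \<noteq> g \<longrightarrow> (\<Sum>u\<in>I. f u * g u) = 0"
    and pos: "\<forall>f\<in>F. 0 < (\<Sum>u\<in>I. f u * f u)"
  shows "fun_vs.independent F"
  unfolding fun_vs.independent_explicit_module
proof (intro allI impI)
  fix t c w assume a: "finite t" "t \<subseteq> F" "(\<Sum>v\<in>t. (\<lambda>y. c v * v y)) = 0" "w \<in> t"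
  have "(\<Sum>v\<in>t. c v * v y) = 0" for y
    using fun_cong[OF a(3), of y] by (simp add: sum_fun_apply[OF a(1)])
  then have "0 = (\<Sum>y\<in>I. (\<Sum>v\<in>t. c v * v y) * w y)" by simp
  also have "\<dots> = (\<Sum>v\<in>t. c v * (\<Sum>y\<in>I. v y * w y))"
    by (simp add: sum_distrib_left sum_distrib_right algebra_simps sum.swap[of _ I])
  also have "\<dots> = (\<Sum>v\<in>t. if v = w then c w * (\<Sum>y\<in>I. w y * w y) else 0)"
    using a(2,4) orth by (intro sum.cong refl) auto
  also have "\<dots> = c w * (\<Sum>y\<in>I. w y * w y)" using a(1,4) by (simp add: sum.delta')
  finally have "c w * (\<Sum>y\<in>I. w y * w y) = 0" by simp
  moreover have "0 < (\<Sum>y\<in>I. w y * w y)" using pos a(2,4) by blast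
  ultimately show "c w = 0" by simp
qed

lemma finite_orthogonal_family:
  fixes F :: "('a \<Rightarrow> real) set"
  assumes I: "finite I"
    and supp: "\<forall>f\<in>F. \<forall>u. u \<notin> I \<longrightarrow> f u = 0"
    and orth: "\<forall>f\<in>F. \<forall>g\<in>F. f \<noteq> g \<longrightarrow> (\<Sum>u\<in>I. f u * g u) = 0"
    and pos: "\<forall>f\<in>F. 0 < (\<Sum>u\<in>I. f u * f u)"
  shows "finite F"
proof -
  define \<delta> where "\<delta> i u = (if u = i then 1 else (0::real))" for i u :: 'a
  have "F \<subseteq> fun_vs.span (\<delta> ` I)"
  proof
    fix f assume f: "f \<in> F"
    have "f = (\<Sum>i\<in>I. (\<lambda>y. f i * \<delta> i y))"
    proof
      fix y
      have "(\<Sum>i\<in>I. (\<lambda>y. f i * \<delta> i y)) y = (\<Sum>i\<in>I. if y = i then f i else 0)"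
        by (simp add: sum_fun_apply[OF I] \<delta>_def if_distrib cong: if_cong)
      also have "\<dots> = f y" using I supp f by (simp add: sum.delta)
      finally show "f y = (\<Sum>i\<in>I. (\<lambda>y. f i * \<delta> i y)) y" by simp
    qed
    also have "\<dots> \<in> fun_vs.span (\<delta> ` I)"
      by (intro fun_vs.span_sum fun_vs.span_scale fun_vs.span_base) auto
    finally show "f \<in> fun_vs.span (\<delta> ` I)" .
  qed
  then show ?thesis
    using fun_vs.independent_span_bound[OF _ orthogonal_family_independent[OF orth pos]] I by blast
qed

lemma nonneg_quadratic_imp_linear_coeff_0:
  fixes a b :: real
  assumes "\<And>t. 0 \<le> a * t\<^sup>2 + b * t"
  shows "b = 0"
proof (rule ccontr)
  assume b: "b \<noteq> 0"
  define s where "s = 1 / (\<bar>a\<bar> + 1)"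
  have s: "s > 0" "\<bar>a\<bar> * s < 1" unfolding s_def by (auto simp: field_simps)
  have "0 \<le> a * (- b * s)\<^sup>2 + b * (- b * s)" using assms .
  also have "\<dots> = b\<^sup>2 * s * (a * s - 1)" by (simp add: power2_eq_square algebra_simps)
  also have "\<dots> < 0"
  proof -
    have "a * s - 1 < 0" using s abs_ge_self[of a] by (smt (verit) mult_right_mono)
    moreover have "b\<^sup>2 * s > 0" using b s by simp
    ultimately show ?thesis by (simp add: mult_pos_neg)
  qed
  finally show False by simp
qed

locale dirichlet_graph =
  fixes V :: "'a set" and E :: "'a set set"
  assumes graph: "graph V E"
begin

abbreviation "I \<equiv> Defs.interior V E"
abbreviation "\<Delta> \<equiv> dirichlet_op V E"

definition dform :: "('a \<Rightarrow> real) \<Rightarrow> real" where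
  "dform x = (\<Sum>v\<in>I. x v * \<Delta> x v)"

definition sqnorm :: "('a \<Rightarrow> real) \<Rightarrow> real" where
  "sqnorm x = (\<Sum>v\<in>I. (x v)\<^sup>2)"

lemma finite_V: "finite V"
  using graph unfolding graph_def by simp

lemma finite_I: "finite I"
  using finite_V unfolding Defs.interior_def by simp

lemma Delta_alt: "\<Delta> x v = real (deg E v) * x v - (\<Sum>w\<in>I. if adj E v w then x w else 0)"
  unfolding dirichlet_op_def by (simp add: sum.inter_filter[OF finite_I])

lemma Delta_add_scale: "\<Delta> (\<lambda>u. x u + t * y u) v = \<Delta> x v + t * \<Delta> y v"
proof -
  have "(\<Sum>w\<in>I. if adj E v w then x w + t * y w else 0)
      = (\<Sum>w\<in>I. (if adj E v w then x w else 0) + t * (if adj E v w then y w else 0))"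
    by (intro sum.cong refl) auto
  also have "\<dots> = (\<Sum>w\<in>I. if adj E v w then x w else 0) + t * (\<Sum>w\<in>I. if adj E v w then y w else 0)"
    by (simp add: sum.distrib sum_distrib_left)
  finally show ?thesis unfolding Delta_alt by (simp add: algebra_simps)
qed

lemma Delta_scale: "\<Delta> (\<lambda>u. t * y u) v = t * \<Delta> y v"
  using Delta_add_scale[of "\<lambda>_. 0" t y v] unfolding Delta_alt by (simp cong: if_cong)

lemma Delta_cong: "(\<And>u. u \<in> I \<Longrightarrow> x u = y u) \<Longrightarrow> v \<in> I \<Longrightarrow> \<Delta> x v = \<Delta> y v"
  unfolding dirichlet_op_def by auto

lemma sum_mult_Delta_commute: "(\<Sum>v\<in>I. y v * \<Delta> x v) = (\<Sum>v\<in>I. x v * \<Delta> y v)"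
proof -
  have expand: "(\<Sum>v\<in>I. y v * \<Delta> x v) = (\<Sum>v\<in>I. real (deg E v) * x v * y v)
      - (\<Sum>v\<in>I. \<Sum>w\<in>I. if adj E v w then y v * x w else 0)" for x y
    unfolding Delta_alt
    by (simp add: algebra_simps sum_subtractf sum_distrib_left if_distrib cong: if_cong)
  have "(\<Sum>v\<in>I. \<Sum>w\<in>I. if adj E v w then y v * x w else 0)
      = (\<Sum>w\<in>I. \<Sum>v\<in>I. if adj E w v then x w * y v else 0)"
    by (subst sum.swap) (auto simp: adj_commute mult.commute intro!: sum.cong)
  then show ?thesis using expand[of x y] expand[of y x] by (simp add: ac_simps)
qed

lemma dform_cong: "(\<And>u. u \<in> I \<Longrightarrow> x u = y u) \<Longrightarrow> dform x = dform y"
  unfolding dform_def using Delta_cong[of x y] by (auto intro!: sum.cong)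

lemma sqnorm_cong: "(\<And>u. u \<in> I \<Longrightarrow> x u = y u) \<Longrightarrow> sqnorm x = sqnorm y"
  unfolding sqnorm_def by auto

lemma dform_scale: "dform (\<lambda>u. t * y u) = t\<^sup>2 * dform y"
  unfolding dform_def Delta_scale by (simp add: sum_distrib_left power2_eq_square algebra_simps)

lemma sqnorm_scale: "sqnorm (\<lambda>u. t * y u) = t\<^sup>2 * sqnorm y"
  unfolding sqnorm_def by (simp add: sum_distrib_left power_mult_distrib)

lemma sqnorm_nonneg: "0 \<le> sqnorm x"
  unfolding sqnorm_def by (intro sum_nonneg) simp

lemma sqnorm_pos_iff: "0 < sqnorm x \<longleftrightarrow> (\<exists>v\<in>I. x v \<noteq> 0)"
  using sum_nonneg_eq_0_iff[OF finite_I, of "\<lambda>v. (x v)\<^sup>2"] sqnorm_nonneg[of x]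
  unfolding sqnorm_def by force

lemma sqnorm_eq_sum_V: "(\<And>u. u \<notin> I \<Longrightarrow> x u = 0) \<Longrightarrow> sqnorm x = (\<Sum>v\<in>V. (x v)\<^sup>2)"
  unfolding sqnorm_def using finite_V
  by (intro sum.mono_neutral_left) (auto simp: Defs.interior_def)

lemma dform_eigenvector:
  assumes "\<forall>v\<in>I. \<Delta> x v = \<mu> * x v"
  shows "dform x = \<mu> * sqnorm x"
  unfolding dform_def sqnorm_def using assms
  by (simp add: sum_distrib_left power2_eq_square algebra_simps)

lemma dform_add_scale:
  "dform (\<lambda>u. x u + t * y u) = dform x + 2 * t * (\<Sum>v\<in>I. y v * \<Delta> x v) + t\<^sup>2 * dform y"
proof -
  have "dform (\<lambda>u. x u + t * y u)
      = dform x + t * (\<Sum>v\<in>I. y v * \<Delta> x v) + t * (\<Sum>v\<in>I. x v * \<Delta> y v) + t\<^sup>2 * dform y"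
    unfolding dform_def Delta_add_scale
    by (simp add: algebra_simps power2_eq_square sum.distrib sum_distrib_left)
  then show ?thesis using sum_mult_Delta_commute[of y x] by simp
qed

lemma sqnorm_add_scale:
  "sqnorm (\<lambda>u. x u + t * y u) = sqnorm x + 2 * t * (\<Sum>v\<in>I. y v * x v) + t\<^sup>2 * sqnorm y"
  unfolding sqnorm_def
  by (simp add: algebra_simps power2_eq_square sum.distrib sum_distrib_left)

text \<open>The minimum of the Rayleigh quotient is attained on the compact set of unit vectors
  supported on \<open>I\<close>.\<close>

definition unit_sphere where
  "unit_sphere = (\<Pi>\<^sub>E v\<in>UNIV. if v \<in> I then {-1..1} else {0::real}) \<inter> {x. sqnorm x = 1}"

lemma continuous_on_coordinate: "continuous_on A (\<lambda>x::'a \<Rightarrow> real. x v)"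
  by (rule continuous_on_subset[OF continuous_on_product_coordinates]) simp

lemma continuous_on_sqnorm: "continuous_on A sqnorm"
  unfolding sqnorm_def by (intro continuous_intros continuous_on_coordinate)

lemma continuous_on_dform: "continuous_on A dform"
  unfolding dform_def dirichlet_op_def by (intro continuous_intros continuous_on_coordinate)

lemma compact_unit_sphere: "compact unit_sphere"
proof -
  have "compactin (product_topology (\<lambda>v. euclidean) UNIV)
           (\<Pi>\<^sub>E v\<in>UNIV. if v \<in> I then {-1..1} else {0::real})"
    by (subst compactin_PiE) auto
  then have "compact (\<Pi>\<^sub>E v\<in>UNIV. if v \<in> I then {-1..1} else {0::real})"
    by (simp add: euclidean_product_topology)
  moreover have "closed {x. sqnorm x = 1}"
    by (rule closed_Collect_eq) (auto intro: continuous_on_sqnorm)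
  ultimately show ?thesis unfolding unit_sphere_def by (rule compact_Int_closed)
qed

lemma unit_sphereI:
  assumes "\<forall>v. v \<notin> I \<longrightarrow> x v = 0" "sqnorm x = 1"
  shows "x \<in> unit_sphere"
proof -
  have "(x v)\<^sup>2 \<le> sqnorm x" if "v \<in> I" for v
    unfolding sqnorm_def using that finite_I by (intro member_le_sum) auto
  then have "\<bar>x v\<bar> \<le> 1" if "v \<in> I" for v
    using that assms(2) by (metis abs_le_square_iff abs_one power_one)
  then show ?thesis unfolding unit_sphere_def using assms by (auto simp: PiE_UNIV_domain abs_le_iff)
qed

definition minimiser where
  "minimiser = (SOME x. x \<in> unit_sphere \<and> (\<forall>y\<in>unit_sphere. dform x \<le> dform y))"

definition rayleigh_min where "rayleigh_min = dform minimiser"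

lemma minimiser:
  assumes "I \<noteq> {}"
  shows "minimiser \<in> unit_sphere" "\<And>y. y \<in> unit_sphere \<Longrightarrow> rayleigh_min \<le> dform y"
proof -
  obtain v where v: "v \<in> I" using assms by blast
  define e where "e u = (if u = v then 1 else (0::real))" for u
  have "(\<Sum>u\<in>I. (e u)\<^sup>2) = (\<Sum>u\<in>I. if u = v then 1 else 0)"
    by (intro sum.cong refl) (auto simp: e_def)
  then have "sqnorm e = 1" unfolding sqnorm_def using v finite_I by simp
  then have "e \<in> unit_sphere" using v by (intro unit_sphereI) (auto simp: e_def)
  then have "\<exists>x\<in>unit_sphere. \<forall>y\<in>unit_sphere. dform x \<le> dform y"
    using continuous_attains_inf[OF compact_unit_sphere _ continuous_on_dform] by blast
  then have "minimiser \<in> unit_sphere \<and> (\<forall>y\<in>unit_sphere. dform minimiser \<le> dform y)"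
    unfolding minimiser_def by (rule someI2_bex) auto
  then show "minimiser \<in> unit_sphere" "\<And>y. y \<in> unit_sphere \<Longrightarrow> rayleigh_min \<le> dform y"
    unfolding rayleigh_min_def by auto
qed

lemma rayleigh_min_le:
  assumes "I \<noteq> {}"
  shows "rayleigh_min * sqnorm y \<le> dform y"
proof (cases "sqnorm y > 0")
  case True
  define c where "c = 1 / sqrt (sqnorm y)"
  define z where "z u = (if u \<in> I then c * y u else 0)" for u
  have c2: "c\<^sup>2 * sqnorm y = 1" unfolding c_def using True by (simp add: power_divide)
  have "sqnorm z = c\<^sup>2 * sqnorm y"
    unfolding z_def by (subst sqnorm_scale[symmetric]) (rule sqnorm_cong, simp)
  then have "z \<in> unit_sphere" using c2 by (intro unit_sphereI) (auto simp: z_def)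
  then have "rayleigh_min \<le> dform z" using minimiser(2)[OF assms] by blast
  also have "dform z = c\<^sup>2 * dform y"
    unfolding z_def by (subst dform_scale[symmetric]) (rule dform_cong, simp)
  finally have "rayleigh_min * sqnorm y \<le> c\<^sup>2 * dform y * sqnorm y"
    using mult_right_mono[OF _ sqnorm_nonneg] by blast
  also have "\<dots> = dform y" using c2 by (simp add: algebra_simps)
  finally show ?thesis .
next
  case False
  then have "\<forall>v\<in>I. y v = 0" using sqnorm_pos_iff by blast
  then have "sqnorm y = 0" "dform y = 0"
    unfolding sqnorm_def dform_def dirichlet_op_def by simp_all
  then show ?thesis by simp
qed

text \<open>First variation: \<open>t \<mapsto> dform (minimiser + t e\<^sub>v) - rayleigh_min * sqnorm (minimiser + t e\<^sub>v)\<close>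
  is a nonnegative quadratic vanishing at \<open>0\<close>, so its linear coefficient vanishes.\<close>

lemma minimiser_eigenvector:
  assumes ne: "I \<noteq> {}"
  shows "\<forall>v\<in>I. \<Delta> minimiser v = rayleigh_min * minimiser v"
proof
  fix v assume v: "v \<in> I"
  define e where "e u = (if u = v then 1 else (0::real))" for u
  have n1: "sqnorm minimiser = 1" using minimiser(1)[OF ne] unfolding unit_sphere_def by simp
  have "(\<Sum>u\<in>I. e u * g u) = g v" for g :: "'a \<Rightarrow> real"
  proof -
    have "(\<Sum>u\<in>I. e u * g u) = (\<Sum>u\<in>I. if u = v then g u else 0)"
      by (intro sum.cong refl) (simp add: e_def)
    then show ?thesis using v finite_I by simp
  qed
  then have se: "(\<Sum>u\<in>I. e u * \<Delta> minimiser u) = \<Delta> minimiser v"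
      "(\<Sum>u\<in>I. e u * minimiser u) = minimiser v"
    by blast+
  have "0 \<le> (dform e - rayleigh_min * sqnorm e) * t\<^sup>2
      + (2 * \<Delta> minimiser v - 2 * rayleigh_min * minimiser v) * t" for t
    using rayleigh_min_le[OF ne, of "\<lambda>u. minimiser u + t * e u"]
    unfolding sqnorm_add_scale dform_add_scale se n1 rayleigh_min_def[symmetric]
    by (simp add: algebra_simps)
  from nonneg_quadratic_imp_linear_coeff_0[OF this]
  show "\<Delta> minimiser v = rayleigh_min * minimiser v" by simp
qed

lemma rayleigh_min_eigenvalue:
  assumes "I \<noteq> {}"
  shows "rayleigh_min \<in> dirichlet_eigenvalues V E"
proof -
  have "sqnorm minimiser = 1" using minimiser(1)[OF assms] unfolding unit_sphere_def by simp
  then have "\<exists>v\<in>I. minimiser v \<noteq> 0" using sqnorm_pos_iff[of minimiser] by simp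
  then show ?thesis
    unfolding dirichlet_eigenvalues_def using minimiser_eigenvector[OF assms] by blast
qed

lemma rayleigh_min_le_eigenvalue:
  assumes "I \<noteq> {}" "\<mu> \<in> dirichlet_eigenvalues V E"
  shows "rayleigh_min \<le> \<mu>"
proof -
  obtain x where x: "\<exists>v\<in>I. x v \<noteq> 0" "\<forall>v\<in>I. \<Delta> x v = \<mu> * x v"
    using assms(2) unfolding dirichlet_eigenvalues_def by blast
  then have "rayleigh_min * sqnorm x \<le> \<mu> * sqnorm x" "0 < sqnorm x"
    using rayleigh_min_le[OF assms(1), of x] dform_eigenvector[OF x(2)] sqnorm_pos_iff by simp_all
  then show ?thesis by simp
qed

definition eigvec where
  "eigvec \<mu> = (SOME x. (\<exists>v\<in>I. x v \<noteq> 0) \<and> (\<forall>v\<in>I. \<Delta> x v = \<mu> * x v))"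

definition eigvec0 where "eigvec0 \<mu> u = (if u \<in> I then eigvec \<mu> u else 0)"

lemma eigvec:
  assumes "\<mu> \<in> dirichlet_eigenvalues V E"
  shows "(\<exists>v\<in>I. eigvec \<mu> v \<noteq> 0) \<and> (\<forall>v\<in>I. \<Delta> (eigvec \<mu>) v = \<mu> * eigvec \<mu> v)"
proof -
  have "\<exists>x. (\<exists>v\<in>I. x v \<noteq> 0) \<and> (\<forall>v\<in>I. \<Delta> x v = \<mu> * x v)"
    using assms unfolding dirichlet_eigenvalues_def by simp
  then show ?thesis unfolding eigvec_def by (rule someI_ex)
qed

lemma eigvec_orthogonal:
  assumes "\<mu>1 \<in> dirichlet_eigenvalues V E" "\<mu>2 \<in> dirichlet_eigenvalues V E" "\<mu>1 \<noteq> \<mu>2"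
  shows "(\<Sum>u\<in>I. eigvec \<mu>1 u * eigvec \<mu>2 u) = 0"
proof -
  have "\<mu>1 * (\<Sum>u\<in>I. eigvec \<mu>2 u * eigvec \<mu>1 u) = (\<Sum>u\<in>I. eigvec \<mu>2 u * \<Delta> (eigvec \<mu>1) u)"
    using eigvec[OF assms(1)] by (simp add: sum_distrib_left algebra_simps)
  also have "\<dots> = (\<Sum>u\<in>I. eigvec \<mu>1 u * \<Delta> (eigvec \<mu>2) u)" by (rule sum_mult_Delta_commute)
  also have "\<dots> = \<mu>2 * (\<Sum>u\<in>I. eigvec \<mu>1 u * eigvec \<mu>2 u)"
    using eigvec[OF assms(2)] by (simp add: sum_distrib_left algebra_simps)
  finally have "(\<mu>1 - \<mu>2) * (\<Sum>u\<in>I. eigvec \<mu>1 u * eigvec \<mu>2 u) = 0" by (simp add: algebra_simps)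
  then show ?thesis using assms(3) by simp
qed

lemma finite_dirichlet_eigenvalues: "finite (dirichlet_eigenvalues V E)"
proof -
  define EV where "EV = dirichlet_eigenvalues V E"
  have sq_pos: "0 < (\<Sum>u\<in>I. eigvec0 \<mu> u * eigvec0 \<mu> u)" if "\<mu> \<in> EV" for \<mu>
    using that eigvec[of \<mu>] sqnorm_pos_iff[of "eigvec0 \<mu>"]
    unfolding EV_def sqnorm_def eigvec0_def by (simp add: power2_eq_square)
  have orth: "(\<Sum>u\<in>I. eigvec0 \<mu>1 u * eigvec0 \<mu>2 u) = 0"
    if "\<mu>1 \<in> EV" "\<mu>2 \<in> EV" "\<mu>1 \<noteq> \<mu>2" for \<mu>1 \<mu>2
    using eigvec_orthogonal that unfolding EV_def eigvec0_def by simp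
  have inj: "inj_on eigvec0 EV"
    by (rule inj_onI, rule ccontr) (metis orth sq_pos less_irrefl)
  have "finite (eigvec0 ` EV)"
    by (rule finite_orthogonal_family[OF finite_I]) (use orth sq_pos in \<open>auto simp: eigvec0_def\<close>)
  then show ?thesis using inj finite_imageD unfolding EV_def by blast
qed

lemma lambda_D_eq_rayleigh_min: "I \<noteq> {} \<Longrightarrow> lambda_D V E = rayleigh_min"
  unfolding lambda_D_def using rayleigh_min_le_eigenvalue rayleigh_min_eigenvalue
  by (intro Min_eqI[OF finite_dirichlet_eigenvalues]) auto

lemma lambda_D_eigenvalue: "I \<noteq> {} \<Longrightarrow> lambda_D V E \<in> dirichlet_eigenvalues V E"
  using lambda_D_eq_rayleigh_min rayleigh_min_eigenvalue by simp

lemma lambda_D_le_rayleigh: "I \<noteq> {} \<Longrightarrow> lambda_D V E * sqnorm y \<le> dform y"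
  using lambda_D_eq_rayleigh_min rayleigh_min_le by simp

lemma dform_eq_sum_adj_pairs:
  assumes z: "\<And>u. u \<in> V \<Longrightarrow> u \<notin> I \<Longrightarrow> x u = 0"
  shows "2 * dform x = (\<Sum>(v,w)\<in>Sigma V (\<lambda>v. {w\<in>V. adj E v w}). (x v - x w)\<^sup>2)"
proof -
  have IV: "I \<subseteq> V" unfolding Defs.interior_def by auto
  define A where "A v w = (if adj E v w then 1 else 0 :: real)" for v w
  have A_commute: "A v w = A w v" for v w unfolding A_def by (simp add: adj_commute)
  have deg: "(\<Sum>w\<in>V. A v w) = real (deg E v)" if "v \<in> V" for v
    using deg_eq_card_adj[OF graph that] unfolding A_def
    by (simp add: sum.If_cases[OF finite_V] Int_def)
  have "dform x = (\<Sum>v\<in>I. real (deg E v) * (x v)\<^sup>2 - x v * (\<Sum>w\<in>V. A v w * x w))"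
  proof -
    have "(\<Sum>w\<in>I. if adj E v w then x w else 0) = (\<Sum>w\<in>V. A v w * x w)" for v
      unfolding A_def using z IV finite_V by (intro sum.mono_neutral_cong_left) auto
    then show ?thesis unfolding dform_def Delta_alt by (simp add: algebra_simps power2_eq_square)
  qed
  also have "\<dots> = (\<Sum>v\<in>V. real (deg E v) * (x v)\<^sup>2 - x v * (\<Sum>w\<in>V. A v w * x w))"
    using z IV finite_V by (intro sum.mono_neutral_left) auto
  also have "\<dots> = (\<Sum>v\<in>V. \<Sum>w\<in>V. A v w * ((x v)\<^sup>2 - x v * x w))"
    using deg by (intro sum.cong refl)
      (simp add: sum_subtractf sum_distrib_left sum_distrib_right[symmetric] algebra_simps)
  finally have "2 * dform x = (\<Sum>v\<in>V. \<Sum>w\<in>V. A v w * ((x v)\<^sup>2 - x v * x w))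
      + (\<Sum>w\<in>V. \<Sum>v\<in>V. A w v * ((x w)\<^sup>2 - x w * x v))" by simp
  also have "\<dots> = (\<Sum>v\<in>V. \<Sum>w\<in>V. A v w * (x v - x w)\<^sup>2)"
    by (subst (2) sum.swap)
      (simp add: A_commute sum.distrib[symmetric] power2_eq_square algebra_simps)
  also have "\<dots> = (\<Sum>v\<in>V. \<Sum>w\<in>{w\<in>V. adj E v w}. (x v - x w)\<^sup>2)"
    unfolding A_def
    by (rule sum.cong[OF refl]) (auto simp: sum.inter_filter[OF finite_V] intro: sum.cong)
  also have "\<dots> = (\<Sum>(v,w)\<in>Sigma V (\<lambda>v. {w\<in>V. adj E v w}). (x v - x w)\<^sup>2)"
    by (rule sum.Sigma) (auto simp: finite_V)
  finally show ?thesis .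
qed

text \<open>Replacing an eigenfunction of \<open>lambda_D\<close> by its absolute value does not increase the
  Dirichlet form, since \<open>\<bar>\<bar>a\<bar> - \<bar>b\<bar>\<bar> \<le> \<bar>a - b\<bar>\<close> on every edge.\<close>

lemma nonneg_rayleigh_witness:
  assumes "I \<noteq> {}"
  obtains f where "\<And>u. 0 \<le> f u" "\<And>u. u \<notin> I \<Longrightarrow> f u = 0" "0 < sqnorm f"
    "dform f \<le> lambda_D V E * sqnorm f"
proof -
  obtain x where x: "\<exists>v\<in>I. x v \<noteq> 0" "\<forall>v\<in>I. \<Delta> x v = lambda_D V E * x v"
    using lambda_D_eigenvalue[OF assms] unfolding dirichlet_eigenvalues_def by blast
  define x0 where "x0 u = (if u \<in> I then x u else 0)" for u
  define f where "f u = \<bar>x0 u\<bar>" for u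
  have f_supp: "u \<notin> I \<Longrightarrow> f u = 0" for u by (simp add: f_def x0_def)
  have norm_f: "sqnorm f = sqnorm x" unfolding sqnorm_def f_def x0_def by simp
  have "0 < sqnorm x" using x(1) sqnorm_pos_iff by blast
  have "dform x0 = lambda_D V E * sqnorm x"
    using dform_cong[of x0 x] dform_eigenvector[OF x(2)] by (simp add: x0_def)
  have "(\<Sum>(v,w)\<in>Sigma V (\<lambda>v. {w\<in>V. adj E v w}). (f v - f w)\<^sup>2)
      \<le> (\<Sum>(v,w)\<in>Sigma V (\<lambda>v. {w\<in>V. adj E v w}). (x0 v - x0 w)\<^sup>2)"
    unfolding f_def by (intro sum_mono) (clarsimp, metis abs_le_square_iff abs_triangle_ineq3)
  then have "dform f \<le> dform x0"
    using dform_eq_sum_adj_pairs[of f] dform_eq_sum_adj_pairs[of x0] f_supp by (simp add: x0_def)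
  then show ?thesis
    using that[of f] f_supp norm_f \<open>0 < sqnorm x\<close> \<open>dform x0 = _\<close> by (simp add: f_def)
qed

end

section \<open>Edge sums along a decreasing ordering\<close>

lemma sum_adj_pairs_reindex:
  fixes F :: "'a \<Rightarrow> 'a \<Rightarrow> real" and \<sigma> :: "nat \<Rightarrow> 'a"
  assumes bij: "bij_betw \<sigma> {0..<n} V" and irrefl: "\<And>v. \<not> adj E v v"
    and F_commute: "\<And>v w. F v w = F w v"
  shows "(\<Sum>(v,w)\<in>Sigma V (\<lambda>v. {w\<in>V. adj E v w}). F v w)
       = 2 * (\<Sum>(i,j)\<in>{(i,j). i < j \<and> j < n \<and> adj E (\<sigma> i) (\<sigma> j)}. F (\<sigma> i) (\<sigma> j))"
proof -
  define P where "P = {(i,j). i < j \<and> j < n \<and> adj E (\<sigma> i) (\<sigma> j)}"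
  define Q where "Q = {(i,j). i < n \<and> j < n \<and> adj E (\<sigma> i) (\<sigma> j)}"
  have inj: "inj_on \<sigma> {0..<n}" using bij_betw_imp_inj_on[OF bij] .
  have img: "\<sigma> ` {0..<n} = V" using bij_betw_imp_surj_on[OF bij] .
  have fP: "finite P" unfolding P_def by (rule finite_subset[of _ "{0..<n} \<times> {0..<n}"]) auto
  have "Sigma V (\<lambda>v. {w\<in>V. adj E v w}) = (\<lambda>(i,j). (\<sigma> i, \<sigma> j)) ` Q"
  proof
    show "Sigma V (\<lambda>v. {w\<in>V. adj E v w}) \<subseteq> (\<lambda>(i,j). (\<sigma> i, \<sigma> j)) ` Q"
    proof
      fix p assume "p \<in> Sigma V (\<lambda>v. {w\<in>V. adj E v w})"
      then obtain v w where p: "p = (v,w)" "v \<in> V" "w \<in> V" "adj E v w" by auto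
      obtain i j where "i < n" "j < n" "v = \<sigma> i" "w = \<sigma> j" using p img by force
      then show "p \<in> (\<lambda>(i,j). (\<sigma> i, \<sigma> j)) ` Q" using p unfolding Q_def by force
    qed
  qed (use img in \<open>auto simp: Q_def\<close>)
  moreover have "inj_on (\<lambda>(i,j). (\<sigma> i, \<sigma> j)) Q"
    using inj unfolding Q_def inj_on_def by auto
  ultimately have "(\<Sum>(v,w)\<in>Sigma V (\<lambda>v. {w\<in>V. adj E v w}). F v w) = (\<Sum>(i,j)\<in>Q. F (\<sigma> i) (\<sigma> j))"
    by (simp add: sum.reindex case_prod_unfold)
  also have "Q = P \<union> (\<lambda>(i,j). (j,i)) ` P"
  proof
    show "Q \<subseteq> P \<union> (\<lambda>(i,j). (j,i)) ` P"
    proof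
      fix p assume "p \<in> Q"
      then obtain i j where p: "p = (i,j)" "i < n" "j < n" "adj E (\<sigma> i) (\<sigma> j)"
        unfolding Q_def by auto
      then have "i \<noteq> j" using irrefl by auto
      then show "p \<in> P \<union> (\<lambda>(i,j). (j,i)) ` P"
        using p adj_commute[of E "\<sigma> i" "\<sigma> j"] unfolding P_def
        by (cases "i < j") (auto simp: image_iff)
    qed
  qed (auto simp: P_def Q_def adj_commute)
  also have "(\<Sum>(i,j)\<in>P \<union> (\<lambda>(i,j). (j,i)) ` P. F (\<sigma> i) (\<sigma> j))
      = (\<Sum>(i,j)\<in>P. F (\<sigma> i) (\<sigma> j)) + (\<Sum>(i,j)\<in>(\<lambda>(i,j). (j,i)) ` P. F (\<sigma> i) (\<sigma> j))"
    by (rule sum.union_disjoint) (use fP in \<open>auto simp: P_def\<close>)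
  also have "(\<Sum>(i,j)\<in>(\<lambda>(i,j). (j,i)) ` P. F (\<sigma> i) (\<sigma> j)) = (\<Sum>(i,j)\<in>P. F (\<sigma> i) (\<sigma> j))"
    by (subst sum.reindex) (auto simp: inj_on_def F_commute case_prod_unfold)
  finally show ?thesis unfolding P_def by simp
qed

text \<open>For a nonincreasing sequence \<open>a\<close> and \<open>i < j\<close>, telescoping over the cuts \<open>i < m \<le> j\<close> gives
  \<open>(a i - a j)\<^sup>2 = (\<Sum>m. (a (m - 1) - a m) * cut_weight a m j)\<close>. So a sum of
  \<open>(a i - a j)\<^sup>2\<close> over index pairs is a combination, with nonnegative coefficients
  \<open>a (m - 1) - a m\<close>, of the total weights of the pairs crossing each cut \<open>m\<close>; and
  \<open>cut_weight a m j\<close> is nonnegative and increasing in \<open>j\<close>.\<close>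

definition cut_weight :: "(nat \<Rightarrow> real) \<Rightarrow> nat \<Rightarrow> nat \<Rightarrow> real" where
  "cut_weight a m j = a (m - 1) + a m - 2 * a j"

definition crossing :: "(nat \<times> nat) set \<Rightarrow> nat \<Rightarrow> (nat \<times> nat) set" where
  "crossing P m = {p \<in> P. fst p < m \<and> m \<le> snd p}"

lemma sum_pred_diff_telescope:
  fixes g :: "nat \<Rightarrow> real"
  shows "i \<le> k \<Longrightarrow> (\<Sum>m\<in>{Suc i..k}. g (m - 1) - g m) = g i - g k"
proof (induction k rule: dec_induct)
  case (step k)
  have "{Suc i..Suc k} = insert (Suc k) {Suc i..k}" using step by auto
  then show ?case using step by simp
qed simp

lemma square_diff_telescope:
  fixes a :: "nat \<Rightarrow> real"
  assumes "i \<le> j"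
  shows "(a i - a j)\<^sup>2 = (\<Sum>m\<in>{Suc i..j}. (a (m - 1) - a m) * cut_weight a m j)"
proof -
  have "(\<Sum>m\<in>{Suc i..j}. (a (m - 1) - a m) * cut_weight a m j)
      = (\<Sum>m\<in>{Suc i..j}. (a (m - 1) - a j)\<^sup>2 - (a m - a j)\<^sup>2)"
    unfolding cut_weight_def by (intro sum.cong refl) (simp add: power2_eq_square algebra_simps)
  also have "\<dots> = (a i - a j)\<^sup>2"
    using sum_pred_diff_telescope[OF assms, of "\<lambda>m. (a m - a j)\<^sup>2"] by simp
  finally show ?thesis by simp
qed

lemma sum_sq_diff_eq_cut_sum:
  fixes a :: "nat \<Rightarrow> real"
  assumes fP: "finite P" and P: "\<And>i j. (i,j) \<in> P \<Longrightarrow> i < j \<and> j < n"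
  shows "(\<Sum>(i,j)\<in>P. (a i - a j)\<^sup>2)
       = (\<Sum>m\<in>{1..<n}. (a (m - 1) - a m) * (\<Sum>p\<in>crossing P m. cut_weight a m (snd p)))"
proof -
  define c where "c p m = (if fst p < m \<and> m \<le> snd p then (a (m - 1) - a m) * cut_weight a m (snd p)
    else 0)" for p m
  have "(\<Sum>(i,j)\<in>P. (a i - a j)\<^sup>2) = (\<Sum>p\<in>P. \<Sum>m\<in>{1..<n}. c p m)"
  proof (intro sum.cong refl)
    fix p assume "p \<in> P"
    then obtain i j where p: "p = (i,j)" "i < j" "j < n" using P by (cases p) auto
    have "{Suc i..j} = {m\<in>{1..<n}. i < m \<and> m \<le> j}" using p by auto
    then have "(\<Sum>m\<in>{1..<n}. c p m) = (\<Sum>m\<in>{Suc i..j}. (a (m - 1) - a m) * cut_weight a m j)"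
      unfolding c_def p(1) fst_conv snd_conv
      by (simp only: sum.inter_filter[OF finite_atLeastLessThan])
    then show "(case p of (i, j) \<Rightarrow> (a i - a j)\<^sup>2) = (\<Sum>m\<in>{1..<n}. c p m)"
      using square_diff_telescope[of i j a] p by simp
  qed
  also have "\<dots> = (\<Sum>m\<in>{1..<n}. \<Sum>p\<in>P. c p m)"
    by (rule sum.swap)
  also have "\<dots> = (\<Sum>m\<in>{1..<n}. (a (m - 1) - a m) * (\<Sum>p\<in>crossing P m. cut_weight a m (snd p)))"
    unfolding crossing_def c_def
    by (simp add: sum.inter_filter[OF fP] sum_distrib_left if_distrib[of "\<lambda>t. _ * t"] cong: if_cong)
  finally show ?thesis .
qed

lemma sum_sq_diff_le_if_cut_weights_le:
  fixes a :: "nat \<Rightarrow> real"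
  assumes fP: "finite P" and P: "\<And>i j. (i,j) \<in> P \<Longrightarrow> i < j \<and> j < n"
    and fQ: "finite Q" and Q: "\<And>i j. (i,j) \<in> Q \<Longrightarrow> i < j \<and> j < n"
    and anti: "\<And>i j. i \<le> j \<Longrightarrow> j < n \<Longrightarrow> a j \<le> a i"
    and cut: "\<And>m. 1 \<le> m \<Longrightarrow> m < n \<Longrightarrow> a m < a (m - 1) \<Longrightarrow>
        (\<Sum>p\<in>crossing Q m. cut_weight a m (snd p)) \<le> (\<Sum>p\<in>crossing P m. cut_weight a m (snd p))"
  shows "(\<Sum>(i,j)\<in>Q. (a i - a j)\<^sup>2) \<le> (\<Sum>(i,j)\<in>P. (a i - a j)\<^sup>2)"
proof -
  have "(\<Sum>m\<in>{1..<n}. (a (m - 1) - a m) * (\<Sum>p\<in>crossing Q m. cut_weight a m (snd p)))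
      \<le> (\<Sum>m\<in>{1..<n}. (a (m - 1) - a m) * (\<Sum>p\<in>crossing P m. cut_weight a m (snd p)))"
  proof (rule sum_mono)
    fix m assume m: "m \<in> {1..<n}"
    have "a m \<le> a (m - 1)" using anti m by auto
    then show "(a (m - 1) - a m) * (\<Sum>p\<in>crossing Q m. cut_weight a m (snd p))
        \<le> (a (m - 1) - a m) * (\<Sum>p\<in>crossing P m. cut_weight a m (snd p))"
      using cut[of m] m by (cases "a m < a (m - 1)") (auto intro: mult_left_mono)
  qed
  then show ?thesis using sum_sq_diff_eq_cut_sum[OF fP P] sum_sq_diff_eq_cut_sum[OF fQ Q] by simp
qed

lemma sum_initial_interval_le:
  fixes h :: "nat \<Rightarrow> real"
  assumes mono: "\<And>j j'. m \<le> j \<Longrightarrow> j \<le> j' \<Longrightarrow> j' < n \<Longrightarrow> h j \<le> h j'"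
    and nonneg: "\<And>j. m \<le> j \<Longrightarrow> j < n \<Longrightarrow> 0 \<le> h j"
  shows "Y \<subseteq> {m..<n} \<Longrightarrow> N \<le> card Y \<Longrightarrow> (\<Sum>j\<in>{m..<m+N}. h j) \<le> (\<Sum>j\<in>Y. h j)"
proof (induction N arbitrary: Y)
  case 0 then show ?case using nonneg by (simp add: subset_eq sum_nonneg)
next
  case (Suc N)
  have fY: "finite Y" using Suc.prems(1) finite_subset by blast
  then have ne: "Y \<noteq> {}" using Suc.prems(2) by auto
  define M where "M = Max Y"
  have MY: "M \<in> Y" unfolding M_def using fY ne by simp
  have "Y \<subseteq> {m..M}" unfolding M_def using Suc.prems(1) fY by auto
  then have "card Y \<le> card {m..M}" by (intro card_mono) auto
  then have MN: "m + N \<le> M" using Suc.prems(2) by simp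
  have Mn: "M < n" using MY Suc.prems(1) by auto
  have IH: "(\<Sum>j\<in>{m..<m+N}. h j) \<le> (\<Sum>j\<in>Y - {M}. h j)"
    by (rule Suc.IH) (use Suc.prems MY fY in auto)
  have "(\<Sum>j\<in>{m..<m + Suc N}. h j) = (\<Sum>j\<in>{m..<m+N}. h j) + h (m + N)" by simp
  also have "\<dots> \<le> (\<Sum>j\<in>Y - {M}. h j) + h M" using IH mono[of "m + N" M] MN Mn by simp
  also have "\<dots> = (\<Sum>j\<in>Y. h j)" using MY fY by (simp add: sum.remove)
  finally show ?case .
qed

lemma initial_cut_weight_le:
  fixes a :: "nat \<Rightarrow> real"
  assumes fP: "finite P" and P: "\<And>i j. (i,j) \<in> P \<Longrightarrow> i < j \<and> j < n"
    and anti: "\<And>i j. i \<le> j \<Longrightarrow> j < n \<Longrightarrow> a j \<le> a i"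
    and m: "1 \<le> m" "m < n"
    and N: "N \<le> card (snd ` crossing P m)"
  shows "(\<Sum>j\<in>{m..<m+N}. cut_weight a m j) \<le> (\<Sum>p\<in>crossing P m. cut_weight a m (snd p))"
proof -
  have nonneg: "0 \<le> cut_weight a m j" if "m \<le> j" "j < n" for j
    using anti[of m j] anti[of "m - 1" j] that unfolding cut_weight_def by linarith
  have sub: "snd ` crossing P m \<subseteq> {m..<n}" unfolding crossing_def using P by force
  have "(\<Sum>j\<in>{m..<m+N}. cut_weight a m j) \<le> (\<Sum>j\<in>snd ` crossing P m. cut_weight a m j)"
    by (rule sum_initial_interval_le[OF _ nonneg sub N]) (use anti in \<open>simp add: cut_weight_def\<close>)
  also have "\<dots> \<le> (\<Sum>p\<in>crossing P m. cut_weight a m (snd p))"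
    using sum_image_le[of "crossing P m" "cut_weight a m" snd] fP sub nonneg
    by (force simp: crossing_def o_def)
  finally show ?thesis .
qed

section \<open>The greedy tree of a degree sequence\<close>

lemma sum_list_take_eq_sum_nth: "m \<le> length xs \<Longrightarrow> sum_list (take m xs) = (\<Sum>l<m. xs ! l)"
  by (simp add: sum_list_sum_nth atLeast0LessThan min_def)

locale degree_sequence =
  fixes ds :: "nat list" and n k :: nat
  assumes length_ds: "length ds = n"
    and interior_entries: "\<And>i. i < k \<Longrightarrow> 2 \<le> ds ! i"
    and leaf_entries: "\<And>i. k \<le> i \<Longrightarrow> i < n \<Longrightarrow> ds ! i = 1"
    and sorted_interior: "sorted (take k ds)"
    and sum_ds: "sum_list ds = 2 * (n - 1)"
    and k: "1 \<le> k" "k < n"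
begin

text \<open>The greedy (breadth-first) tree realising \<open>ds\<close> on vertices \<open>0, \<dots>, n - 1\<close>: vertex \<open>0\<close>
  receives \<open>ds ! 0\<close> children and every later vertex \<open>i\<close> receives \<open>ds ! i - 1\<close> children, always
  the next unused indices. Then the children of \<open>0, \<dots>, i\<close> are exactly \<open>1, \<dots>, last_child i\<close>.\<close>

definition dsum where "dsum i = (\<Sum>l<Suc i. ds ! l)"
definition last_child where "last_child i = dsum i - i"
definition parent_index where "parent_index j = (LEAST i. j \<le> last_child i)"

lemma ds_ge_1: "i < n \<Longrightarrow> 1 \<le> ds ! i"
  using interior_entries leaf_entries by (cases "i < k") force+

lemma dsum_Suc: "dsum (Suc i) = dsum i + ds ! Suc i"
  unfolding dsum_def by simp

lemma dsum_lower_bound: "i < n \<Longrightarrow> Suc i + min (Suc i) k \<le> dsum i"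
proof (induction i)
  case 0 then show ?case using interior_entries[of 0] k ds_ge_1[of 0] unfolding dsum_def by auto
next
  case (Suc i)
  then have "Suc i + min (Suc i) k \<le> dsum i" by simp
  moreover have "(if Suc i < k then 2 else 1) \<le> ds ! Suc i"
    using interior_entries ds_ge_1 Suc.prems by auto
  ultimately show ?case unfolding dsum_Suc by (auto simp: min_def split: if_splits)
qed

lemma dsum_last: "dsum (n - 1) = 2 * (n - 1)"
proof -
  have "sum_list ds = (\<Sum>l<n. ds ! l)" using sum_list_take_eq_sum_nth[of n ds] length_ds by simp
  then show ?thesis unfolding dsum_def using sum_ds k by simp
qed

lemma dsum_before_leaf: assumes "k \<le> j" "j < n" shows "dsum (j - 1) + (n - j) = 2 * (n - 1)"
proof -
  have "(\<Sum>l<n. ds ! l) = (\<Sum>l<j. ds ! l) + (\<Sum>l\<in>{j..<n}. ds ! l)"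
    using assms
    by (metis atLeast0LessThan le_less_trans less_imp_le_nat sum.atLeastLessThan_concat zero_le)
  moreover have "(\<Sum>l\<in>{j..<n}. ds ! l) = n - j" using leaf_entries assms by simp
  moreover have "(\<Sum>l<j. ds ! l) = dsum (j - 1)" unfolding dsum_def using assms k by simp
  ultimately show ?thesis using dsum_last unfolding dsum_def using k by simp
qed

lemma last_child_Suc: "Suc i < n \<Longrightarrow> last_child (Suc i) = last_child i + ds ! Suc i - 1"
  unfolding last_child_def using dsum_Suc dsum_lower_bound[of i] ds_ge_1[of "Suc i"] by auto

lemma last_child_mono: "i \<le> i' \<Longrightarrow> i' < n \<Longrightarrow> last_child i \<le> last_child i'"
proof (induction i' rule: dec_induct)
  case base then show ?case by simp
next
  case (step i) then show ?case using last_child_Suc[of i] ds_ge_1[of "Suc i"] by simp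
qed

lemma last_child_last: "last_child (n - 1) = n - 1"
  unfolding last_child_def using dsum_last by simp

lemma last_child_0: "last_child 0 = ds ! 0" unfolding last_child_def dsum_def by simp

lemma last_child_le: "i < n \<Longrightarrow> last_child i \<le> n - 1"
  using last_child_mono[of i "n - 1"] last_child_last by simp

lemma last_child_ge: assumes "1 \<le> j" "j < n" shows "j \<le> last_child (j - 1)"
proof (cases "j \<le> k")
  case True
  then have "j + j \<le> dsum (j - 1)" using dsum_lower_bound[of "j - 1"] assms by (simp add: min_def)
  then show ?thesis unfolding last_child_def by simp
next
  case False
  then have "dsum (j - 1) + (n - j) = 2 * (n - 1)" using dsum_before_leaf assms by simp
  then show ?thesis unfolding last_child_def using assms by simp
qed

lemma parent_index_le_iff: assumes "j < n" "i < n" shows "parent_index j \<le> i \<longleftrightarrow> j \<le> last_child i"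
proof
  have ex: "j \<le> last_child (n - 1)" using last_child_last assms by simp
  have pj: "j \<le> last_child (parent_index j)"
    unfolding parent_index_def by (rule LeastI[where P="\<lambda>i. j \<le> last_child i", OF ex])
  assume "parent_index j \<le> i"
  then show "j \<le> last_child i" using last_child_mono[of "parent_index j" i] pj assms by simp
next
  assume "j \<le> last_child i"
  then show "parent_index j \<le> i" unfolding parent_index_def by (rule Least_le)
qed

lemma parent_index_less_n: assumes "j < n" shows "parent_index j < n"
proof -
  have "j \<le> last_child (n - 1)" using assms last_child_last by simp
  then have "parent_index j \<le> n - 1" using parent_index_le_iff[of j "n - 1"] assms by simp
  then show ?thesis using k by simp
qed

lemma parent_index_less: assumes "1 \<le> j" "j < n" shows "parent_index j < j"
proof -
  have "parent_index j \<le> j - 1"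
    using parent_index_le_iff[of j "j - 1"] last_child_ge[OF assms] assms by simp
  then show ?thesis using assms by simp
qed

lemma parent_index_mono: "j \<le> j' \<Longrightarrow> j' < n \<Longrightarrow> parent_index j \<le> parent_index j'"
  using parent_index_le_iff[of j "parent_index j'"] parent_index_le_iff[of j' "parent_index j'"]
    parent_index_less_n[of j'] by simp

lemma children_crossing_cut: assumes "1 \<le> m" "m < n"
  shows "{j\<in>{1..<n}. parent_index j < m \<and> m \<le> j} = {m..last_child (m - 1)}"
proof -
  have "\<And>j. j < n \<Longrightarrow> parent_index j < m \<longleftrightarrow> j \<le> last_child (m - 1)"
  proof -
    fix j assume j: "j < n"
    have "parent_index j < m \<longleftrightarrow> parent_index j \<le> m - 1" using assms by auto
    then show "parent_index j < m \<longleftrightarrow> j \<le> last_child (m - 1)"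
      using parent_index_le_iff[OF j, of "m - 1"] assms by simp
  qed
  moreover have "last_child (m - 1) < n"
  proof -
    have "m - 1 < n" using assms by simp
    then have "last_child (m - 1) \<le> n - 1" by (rule last_child_le)
    then show ?thesis using assms by simp
  qed
  ultimately show ?thesis using assms by auto
qed

lemma card_children: assumes "i < n"
  shows "card {j\<in>{1..<n}. parent_index j = i} + (if i = 0 then 0 else 1) = ds ! i"
proof (cases "i = 0")
  case True
  have "{j\<in>{1..<n}. parent_index j = i} = {1..last_child 0}"
  proof -
    have "\<And>j. j < n \<Longrightarrow> parent_index j = 0 \<longleftrightarrow> j \<le> last_child 0"
      using parent_index_le_iff[of _ 0] k by simp
    then show ?thesis using True last_child_le[of 0] k by auto
  qed
  then show ?thesis using True last_child_0 by simp
next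
  case False
  have "{j\<in>{1..<n}. parent_index j = i} = {Suc (last_child (i - 1))..last_child i}"
  proof -
    have iff: "\<And>j. j < n \<Longrightarrow> parent_index j = i \<longleftrightarrow> j \<le> last_child i \<and> \<not> j \<le> last_child (i - 1)"
    proof -
      fix j assume j: "j < n"
      have "parent_index j = i \<longleftrightarrow> parent_index j \<le> i \<and> \<not> parent_index j \<le> i - 1" using False by auto
      then show "parent_index j = i \<longleftrightarrow> j \<le> last_child i \<and> \<not> j \<le> last_child (i - 1)"
        using parent_index_le_iff[OF j, of i] parent_index_le_iff[OF j, of "i - 1"] assms by simp
    qed
    have Ci: "last_child i \<le> n - 1" using last_child_le[OF assms] .
    show ?thesis
    proof (intro set_eqI iffI)
      fix j assume "j \<in> {j\<in>{1..<n}. parent_index j = i}"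
      then show "j \<in> {Suc (last_child (i - 1))..last_child i}" using iff[of j] by auto
    next
      fix j assume j: "j \<in> {Suc (last_child (i - 1))..last_child i}"
      then have "j < n" using Ci assms by auto
      then show "j \<in> {j\<in>{1..<n}. parent_index j = i}" using iff[of j] j by auto
    qed
  qed
  moreover have "last_child i = last_child (i - 1) + ds ! i - 1"
    using last_child_Suc[of "i - 1"] False assms by simp
  ultimately show ?thesis using False ds_ge_1[OF assms] by simp
qed

lemma sum_take_plus_tail:
  assumes "j \<le> n"
  shows "sum_list (take j ds) + (\<Sum>l\<in>{j..<n}. ds ! l) = 2 * (n - 1)"
proof -
  have "(\<Sum>l<n. ds ! l) = (\<Sum>l<j. ds ! l) + (\<Sum>l\<in>{j..<n}. ds ! l)"
    using assms by (metis atLeast0LessThan sum.atLeastLessThan_concat zero_le)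
  moreover have "(\<Sum>l<n. ds ! l) = 2 * (n - 1)"
    using sum_ds sum_list_take_eq_sum_nth[of n ds] length_ds by simp
  ultimately show ?thesis using sum_list_take_eq_sum_nth[of j ds] length_ds assms by simp
qed

lemma tail_sum_lower_bound: assumes "j \<le> k" shows "(n - j) + (k - j) \<le> (\<Sum>l\<in>{j..<n}. ds ! l)"
proof -
  have "(\<Sum>l\<in>{j..<n}. (if l < k then 2 else 1)) \<le> (\<Sum>l\<in>{j..<n}. ds ! l)"
    using interior_entries leaf_entries by (intro sum_mono) auto
  moreover have "(\<Sum>l\<in>{j..<n}. (if l < k then 2 else 1::nat))
      = (\<Sum>l\<in>{j..<n}. 1 + (if l < k then 1 else 0))"
    by (intro sum.cong) auto
  moreover have "\<dots> = (\<Sum>l\<in>{j..<n}. 1) + (\<Sum>l\<in>{j..<n}. if l < k then 1 else 0::nat)"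
    by (rule sum.distrib)
  moreover have "(\<Sum>l\<in>{j..<n}. if l < k then 1 else 0::nat) = card {l\<in>{j..<n}. l < k}"
    by (subst sum.inter_filter[symmetric]) auto
  moreover have "{l\<in>{j..<n}. l < k} = {j..<k}" using k by auto
  ultimately show ?thesis by simp
qed

lemma sum_take_eq_dsum: "1 \<le> m \<Longrightarrow> m \<le> n \<Longrightarrow> sum_list (take m ds) = dsum (m - 1)"
  unfolding dsum_def using sum_list_take_eq_sum_nth[of m ds] length_ds by simp

lemma dsum_eq_last_child: "i < n \<Longrightarrow> dsum i = last_child i + i"
  unfolding last_child_def using dsum_lower_bound[of i] by simp
end

locale greedy_tree = degree_sequence +
  fixes V :: "'a set" and \<sigma> :: "nat \<Rightarrow> 'a"
  assumes bij: "bij_betw \<sigma> {0..<n} V"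
begin

definition greedy_edges where "greedy_edges = (\<lambda>j. {\<sigma> j, \<sigma> (parent_index j)}) ` {1..<n}"

lemma sigma_inj: "inj_on \<sigma> {0..<n}" using bij_betw_imp_inj_on[OF bij] .
lemma sigma_image: "\<sigma> ` {0..<n} = V" using bij_betw_imp_surj_on[OF bij] .
lemma sigma_eq_iff: "a < n \<Longrightarrow> b < n \<Longrightarrow> \<sigma> a = \<sigma> b \<longleftrightarrow> a = b"
  using sigma_inj unfolding inj_on_def by auto
lemma V_sigma: "v \<in> V \<Longrightarrow> \<exists>a<n. v = \<sigma> a" using sigma_image by auto
lemma finite_V: "finite V" using sigma_image by auto

definition rank where "rank = the_inv_into {0..<n} \<sigma>"

lemma rank_sigma: "a < n \<Longrightarrow> rank (\<sigma> a) = a"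
  unfolding rank_def using the_inv_into_f_f[OF sigma_inj] by simp

lemma rank_in_range: "v \<in> V \<Longrightarrow> rank v < n \<and> \<sigma> (rank v) = v"
  using V_sigma rank_sigma by force

lemma adj_greedy_iff: assumes "a < n" "b < n"
  shows "adj greedy_edges (\<sigma> a) (\<sigma> b) \<longleftrightarrow> (1 \<le> a \<and> b = parent_index a) \<or> (1 \<le> b \<and> a = parent_index b)"
proof
  assume "adj greedy_edges (\<sigma> a) (\<sigma> b)"
  then obtain j where j: "1 \<le> j" "j < n" "{\<sigma> a, \<sigma> b} = {\<sigma> j, \<sigma> (parent_index j)}"
    unfolding adj_def greedy_edges_def by auto
  have pj: "parent_index j < n" using parent_index_less_n j by simp
  from j(3) have "(\<sigma> a = \<sigma> j \<and> \<sigma> b = \<sigma> (parent_index j)) \<or> (\<sigma> a = \<sigma> (parent_index j) \<and> \<sigma> b = \<sigma> j)"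
    by (auto simp: doubleton_eq_iff)
  then have "(a = j \<and> b = parent_index j) \<or> (a = parent_index j \<and> b = j)"
    using sigma_eq_iff assms j pj by auto
  then show "(1 \<le> a \<and> b = parent_index a) \<or> (1 \<le> b \<and> a = parent_index b)" using j by auto
next
  assume "(1 \<le> a \<and> b = parent_index a) \<or> (1 \<le> b \<and> a = parent_index b)"
  then show "adj greedy_edges (\<sigma> a) (\<sigma> b)" unfolding adj_def greedy_edges_def using assms
    by (auto simp: insert_commute image_iff)
qed

lemma graph_greedy: "graph V greedy_edges"
  unfolding graph_def
proof (intro conjI ballI)
  show "finite V" by (rule finite_V)
  fix e assume "e \<in> greedy_edges"
  then obtain j where j: "1 \<le> j" "j < n" "e = {\<sigma> j, \<sigma> (parent_index j)}"
    unfolding greedy_edges_def by auto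
  have "parent_index j < j" using parent_index_less j by simp
  then have "\<sigma> j \<noteq> \<sigma> (parent_index j)" using sigma_eq_iff[of j "parent_index j"] j by simp
  then show "card e = 2" using j by simp
  show "e \<subseteq> V" using j sigma_image parent_index_less_n[of j] by auto
qed

lemma walk_to_root: "j < n \<Longrightarrow> \<exists>xs. walk greedy_edges xs \<and> hd xs = \<sigma> j \<and> last xs = \<sigma> 0"
proof (induction j rule: less_induct)
  case (less j)
  show ?case
  proof (cases "j = 0")
    case True then show ?thesis by (intro exI[of _ "[\<sigma> 0]"]) simp
  next
    case False
    then have pj: "parent_index j < j" using parent_index_less less.prems by simp
    then obtain xs where xs: "walk greedy_edges xs" "hd xs = \<sigma> (parent_index j)" "last xs = \<sigma> 0"
      using less by auto
    have "adj greedy_edges (\<sigma> j) (\<sigma> (parent_index j))"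
      using adj_greedy_iff[of j "parent_index j"] less.prems pj False by simp
    then have "walk greedy_edges (\<sigma> j # xs)" using xs by (simp add: walk_Cons)
    moreover have "xs \<noteq> []" using xs unfolding walk_def by simp
    ultimately show ?thesis using xs by (intro exI[of _ "\<sigma> j # xs"]) simp
  qed
qed

lemma connected_greedy: "connected_graph V greedy_edges"
  unfolding connected_graph_def
proof (intro ballI)
  fix v w assume "v \<in> V" "w \<in> V"
  then obtain a b where ab: "a < n" "b < n" "v = \<sigma> a" "w = \<sigma> b" using V_sigma by blast
  obtain xs where xs: "walk greedy_edges xs" "hd xs = \<sigma> a" "last xs = \<sigma> 0"
    using walk_to_root ab by blast
  obtain ys where ys: "walk greedy_edges ys" "hd ys = \<sigma> b" "last ys = \<sigma> 0"
    using walk_to_root ab by blast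
  have "walk greedy_edges (rev ys)" "hd (rev ys) = \<sigma> 0" "last (rev ys) = \<sigma> b"
    using ys walk_rev by (auto simp: hd_rev last_rev)
  then show "\<exists>xs. walk greedy_edges xs \<and> hd xs = v \<and> last xs = w"
    using walk_join[OF xs(1) \<open>walk greedy_edges (rev ys)\<close>] xs ab by auto
qed

lemma acyclic_greedy: "\<not> has_cycle greedy_edges"
proof (rule not_has_cycle_if_unique_lower_neighbour[where rank = rank])
  fix v w assume "adj greedy_edges v w"
  then show "rank v \<noteq> rank w"
    using adj_imp_vertices[OF graph_greedy] rank_in_range by metis
next
  fix v w w'
  assume a: "adj greedy_edges v w" "adj greedy_edges v w'" "rank w < rank v" "rank w' < rank v"
  then have V: "v \<in> V" "w \<in> V" "w' \<in> V" using adj_imp_vertices[OF graph_greedy] by auto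
  have "rank w = parent_index (rank v)" "rank w' = parent_index (rank v)"
    using a V adj_greedy_iff[of "rank v" "rank w"] adj_greedy_iff[of "rank v" "rank w'"]
      parent_index_less[of "rank w"] parent_index_less[of "rank w'"] rank_in_range
        by (metis not_less_iff_gr_or_eq)+
  then show "w = w'" using V rank_in_range by metis
qed

lemma incident_edges: assumes "i < n"
  shows "{e \<in> greedy_edges. \<sigma> i \<in> e}
       = (\<lambda>j. {\<sigma> j, \<sigma> (parent_index j)}) ` {j\<in>{1..<n}. j = i \<or> parent_index j = i}"
proof
  show "{e \<in> greedy_edges. \<sigma> i \<in> e}
      \<subseteq> (\<lambda>j. {\<sigma> j, \<sigma> (parent_index j)}) ` {j\<in>{1..<n}. j = i \<or> parent_index j = i}"
  proof
    fix e assume "e \<in> {e \<in> greedy_edges. \<sigma> i \<in> e}"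
    then obtain j where j: "1 \<le> j" "j < n" "e = {\<sigma> j, \<sigma> (parent_index j)}" "\<sigma> i \<in> e"
      unfolding greedy_edges_def by auto
    then have "i = j \<or> i = parent_index j"
      using sigma_eq_iff[of i j] sigma_eq_iff[of i "parent_index j"] parent_index_less_n[of j] assms
      by auto
    then show "e \<in> (\<lambda>j. {\<sigma> j, \<sigma> (parent_index j)}) ` {j\<in>{1..<n}. j = i \<or> parent_index j = i}"
      using j by auto
  qed
qed (auto simp: greedy_edges_def)

lemma inj_on_edge: "inj_on (\<lambda>j. {\<sigma> j, \<sigma> (parent_index j)}) {1..<n}"
proof (rule inj_onI)
  fix j j' assume j: "j \<in> {1..<n}" "j' \<in> {1..<n}"
    "{\<sigma> j, \<sigma> (parent_index j)} = {\<sigma> j', \<sigma> (parent_index j')}"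
  have pl: "parent_index j < j" "parent_index j' < j'" using parent_index_less j by auto
  show "j = j'"
  proof (rule ccontr)
    assume "j \<noteq> j'"
    then have "\<sigma> j = \<sigma> (parent_index j')" "\<sigma> (parent_index j) = \<sigma> j'"
      using j(3) sigma_eq_iff[of j j'] j(1,2) by (auto simp: doubleton_eq_iff)
    then have "j = parent_index j'" "parent_index j = j'" using sigma_eq_iff j(1,2) pl by auto
    then show False using pl by simp
  qed
qed

lemma deg_greedy: assumes "i < n" shows "deg greedy_edges (\<sigma> i) = ds ! i"
proof -
  have "deg greedy_edges (\<sigma> i) = card {j\<in>{1..<n}. j = i \<or> parent_index j = i}"
    unfolding deg_def incident_edges[OF assms]
    by (rule card_image) (rule inj_on_subset[OF inj_on_edge], auto)
  also have "{j\<in>{1..<n}. j = i \<or> parent_index j = i}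
      = {j\<in>{1..<n}. parent_index j = i} \<union> {j\<in>{1..<n}. j = i}" by auto
  also have "card \<dots> = card {j\<in>{1..<n}. parent_index j = i} + card {j\<in>{1..<n}. j = i}"
  proof (rule card_Un_disjoint)
    show "{j\<in>{1..<n}. parent_index j = i} \<inter> {j\<in>{1..<n}. j = i} = {}"
      using parent_index_less[of i] by auto
  qed auto
  also have "card {j\<in>{1..<n}. j = i} = (if i = 0 then 0 else 1)"
  proof (cases "i = 0")
    case False
    then have "{j\<in>{1..<n}. j = i} = {i}" using assms by auto
    then show ?thesis using False by simp
  qed (auto simp: card_eq_0_iff)
  finally show ?thesis using card_children[OF assms] by simp
qed

lemma interior_greedy: "Defs.interior V greedy_edges = \<sigma> ` {0..<k}"
proof -
  have "\<And>i. i < n \<Longrightarrow> 2 \<le> ds ! i \<longleftrightarrow> i < k" using interior_entries leaf_entries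
    by (metis le_antisym not_le one_le_numeral numeral_le_one_iff semiring_norm(69))
  then show ?thesis unfolding Defs.interior_def using sigma_image deg_greedy k by force
qed

lemma boundary_greedy: "boundary V greedy_edges = \<sigma> ` {k..<n}"
proof -
  have "\<And>i. i < n \<Longrightarrow> ds ! i = 1 \<longleftrightarrow> k \<le> i"
    using interior_entries leaf_entries by (metis not_le numeral_le_one_iff semiring_norm(69))
  then show ?thesis unfolding boundary_def using sigma_image deg_greedy k by force
qed

lemma tree_with_boundary_greedy: "tree_with_boundary V greedy_edges"
  unfolding tree_with_boundary_def is_tree_def
proof (intro conjI)
  show "graph V greedy_edges" by (rule graph_greedy)
  show "V \<noteq> {}" using sigma_image k by auto
  show "connected_graph V greedy_edges" by (rule connected_greedy)
  show "\<not> has_cycle greedy_edges" by (rule acyclic_greedy)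
  have "{0..<n} = {k..<n} \<union> {0..<k}" using k by auto
  then show "V = boundary V greedy_edges \<union> Defs.interior V greedy_edges"
    unfolding interior_greedy boundary_greedy
    using sigma_image by (metis image_Un)
  show "boundary V greedy_edges \<noteq> {}" unfolding boundary_greedy using k by auto
  show "Defs.interior V greedy_edges \<noteq> {}" unfolding interior_greedy using k by auto
qed

lemma deg_seq_greedy: "deg_seq V greedy_edges = ds"
proof -
  have "image_mset (deg greedy_edges) (mset_set (\<sigma> ` {0..<k}))
      = image_mset (deg greedy_edges \<circ> \<sigma>) (mset_set {0..<k})"
    using inj_on_subset[OF sigma_inj, of "{0..<k}"] k
    by (simp add: image_mset_mset_set[symmetric] multiset.map_comp)
  also have "\<dots> = image_mset (\<lambda>i. ds ! i) (mset_set {0..<k})"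
    using deg_greedy k by (intro image_mset_cong) auto
  also have "\<dots> = mset (take k ds)"
  proof -
    have "take k ds = map (\<lambda>i. ds ! i) [0..<k]" using length_ds k by (intro nth_equalityI) auto
    then show ?thesis by simp
  qed
  finally have a: "image_mset (deg greedy_edges) (mset_set (Defs.interior V greedy_edges))
      = mset (take k ds)"
    unfolding interior_greedy .
  have b: "card (boundary V greedy_edges) = n - k"
    unfolding boundary_greedy
    using inj_on_subset[OF sigma_inj, of "{k..<n}"] by (simp add: card_image)
  have "ds = take k ds @ drop k ds" by simp
  also have "drop k ds = replicate (n - k) 1"
    using leaf_entries length_ds by (intro nth_equalityI) auto
  finally have c: "ds = take k ds @ replicate (n - k) 1" .
  show ?thesis unfolding deg_seq_def a b using sorted_interior c by (simp add: sorted_sort_id)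
qed

lemma rooted_tree_greedy: "rooted_tree V greedy_edges (\<sigma> 0)"
proof -
  interpret conn_graph V greedy_edges by unfold_locales (rule graph_greedy, rule connected_greedy)
  show ?thesis by unfold_locales (use acyclic_greedy sigma_image k in auto)
qed

sublocale gt: rooted_tree V greedy_edges "\<sigma> 0" by (rule rooted_tree_greedy)

lemma parent_greedy:
  "1 \<le> j \<Longrightarrow> j < n
    \<Longrightarrow> gt.parent (\<sigma> j) = \<sigma> (parent_index j) \<and> gt.height (\<sigma> j) = Suc (gt.height (\<sigma> (parent_index j)))"
proof (induction j rule: less_induct)
  case (less j)
  have pj: "parent_index j < j" using parent_index_less less.prems by simp
  have a: "adj greedy_edges (\<sigma> j) (\<sigma> (parent_index j))"
    using adj_greedy_iff[of j "parent_index j"] less.prems pj by simp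
  from gt.adj_parent_cases[OF a] show ?case
  proof
    assume "\<sigma> j \<noteq> \<sigma> 0 \<and> \<sigma> (parent_index j) = gt.parent (\<sigma> j)
      \<and> gt.height (\<sigma> j) = Suc (gt.height (\<sigma> (parent_index j)))"
    then show ?thesis by simp
  next
    assume b: "\<sigma> (parent_index j) \<noteq> \<sigma> 0 \<and> \<sigma> j = gt.parent (\<sigma> (parent_index j))
      \<and> gt.height (\<sigma> (parent_index j)) = Suc (gt.height (\<sigma> j))"
    have "parent_index j \<noteq> 0"
    proof
      assume "parent_index j = 0"
      then show False using b by simp
    qed
    then have "gt.parent (\<sigma> (parent_index j)) = \<sigma> (parent_index (parent_index j))"
      using less.IH[of "parent_index j"] pj less.prems by simp
    then have "\<sigma> j = \<sigma> (parent_index (parent_index j))" using b by simp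
    then have "j = parent_index (parent_index j)"
      using sigma_eq_iff[of j "parent_index (parent_index j)"] parent_index_less_n[of "parent_index j"]
        less.prems pj by simp
    moreover have "parent_index (parent_index j) < parent_index j"
      using parent_index_less[of "parent_index j"] \<open>parent_index j \<noteq> 0\<close> pj less.prems by simp
    ultimately show ?thesis using pj by simp
  qed
qed

lemma child_greedy_iff: assumes "a < n" "b < n"
  shows "child greedy_edges (\<sigma> 0) (\<sigma> a) (\<sigma> b) \<longleftrightarrow> 1 \<le> b \<and> parent_index b = a"
proof -
  have c: "child greedy_edges (\<sigma> 0) (\<sigma> a) (\<sigma> b)
      \<longleftrightarrow> adj greedy_edges (\<sigma> a) (\<sigma> b) \<and> gt.height (\<sigma> b) = Suc (gt.height (\<sigma> a))"
    unfolding child_def gt.height_def ..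
  show ?thesis
  proof
    assume ch: "child greedy_edges (\<sigma> 0) (\<sigma> a) (\<sigma> b)"
    then have "(1 \<le> a \<and> b = parent_index a) \<or> (1 \<le> b \<and> a = parent_index b)"
      using c adj_greedy_iff assms by simp
    moreover have "\<not> (1 \<le> a \<and> b = parent_index a)" using ch c parent_greedy[of a] assms by auto
    ultimately show "1 \<le> b \<and> parent_index b = a" by auto
  next
    assume "1 \<le> b \<and> parent_index b = a"
    then show "child greedy_edges (\<sigma> 0) (\<sigma> a) (\<sigma> b)"
      using c adj_greedy_iff assms parent_greedy[of b] by auto
  qed
qed

lemma height_greedy_mono: "b < n \<Longrightarrow> a \<le> b \<Longrightarrow> gt.height (\<sigma> a) \<le> gt.height (\<sigma> b)"
proof (induction b arbitrary: a rule: less_induct)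
  case (less b)
  show ?case
  proof (cases "a = 0")
    case True then show ?thesis using gt.height_root by simp
  next
    case False
    then have "1 \<le> b" using less.prems by simp
    have "parent_index a \<le> parent_index b" using parent_index_mono less.prems by simp
    moreover have "parent_index b < b" using parent_index_less \<open>1 \<le> b\<close> less.prems by simp
    ultimately have "gt.height (\<sigma> (parent_index a)) \<le> gt.height (\<sigma> (parent_index b))"
      using less.IH[of "parent_index b" "parent_index a"] less.prems by simp
    then show ?thesis using parent_greedy[of a] parent_greedy[of b] False \<open>1 \<le> b\<close> less.prems by simp
  qed
qed

lemma SLO_tree_greedy: "SLO_tree V greedy_edges"
  unfolding SLO_tree_def
proof (intro conjI exI)
  show "tree_with_boundary V greedy_edges" by (rule tree_with_boundary_greedy)
  show "SLO_ordering V greedy_edges (\<sigma> 0) rank"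
    unfolding SLO_ordering_def
  proof (intro conjI ballI impI allI)
    show "\<sigma> 0 \<in> V" using sigma_image k by auto
    show "inj_on rank V"
      unfolding rank_def using sigma_image inj_on_the_inv_into[OF sigma_inj] by simp
  next
    fix v w assume vw: "v \<in> V" "w \<in> V" "rank v < rank w"
    then show "gdist greedy_edges v (\<sigma> 0) \<le> gdist greedy_edges w (\<sigma> 0)"
      using height_greedy_mono[of "rank w" "rank v"] rank_in_range[OF vw(1)] rank_in_range[OF vw(2)]
      unfolding gt.height_def by simp
  next
    fix v1 v2 w1 w2 assume a: "v1 \<in> V" "v2 \<in> V" "rank v1 < rank v2" "w1 \<in> V" "w2 \<in> V"
      "child greedy_edges (\<sigma> 0) v1 w1" "child greedy_edges (\<sigma> 0) v2 w2"
    have c1: "parent_index (rank w1) = rank v1"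
      using child_greedy_iff[of "rank v1" "rank w1"] rank_in_range a by force
    have c2: "parent_index (rank w2) = rank v2"
      using child_greedy_iff[of "rank v2" "rank w2"] rank_in_range a by force
    show "rank w1 < rank w2"
    proof (rule ccontr)
      assume "\<not> rank w1 < rank w2"
      then have "parent_index (rank w2) \<le> parent_index (rank w1)"
        using parent_index_mono rank_in_range a by simp
      then show False using c1 c2 a by simp
    qed
  next
    fix v w assume a: "v \<in> V" "w \<in> V" "rank v < rank w" "v \<in> boundary V greedy_edges"
    then have "k \<le> rank v" unfolding boundary_greedy using rank_sigma by auto
    moreover have "rank w < n" "\<sigma> (rank w) = w" using rank_in_range[OF a(2)] by auto
    ultimately show "w \<in> boundary V greedy_edges" unfolding boundary_greedy using a(3)
      by (metis atLeastLessThan_iff image_eqI less_imp_le_nat order.strict_trans1)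
  next
    fix v w
    assume a: "v \<in> Defs.interior V greedy_edges" "w \<in> Defs.interior V greedy_edges" "rank v < rank w"
    then obtain i j where ij: "i < k" "j < k" "v = \<sigma> i" "w = \<sigma> j" unfolding interior_greedy by auto
    then have "i < j" using a rank_sigma k by simp
    then have "take k ds ! i \<le> take k ds ! j"
      using sorted_interior ij length_ds k by (intro sorted_nth_mono) auto
    then show "deg greedy_edges v \<le> deg greedy_edges w" using deg_greedy ij k by simp
  qed
qed

definition edge_index_pairs where
  "edge_index_pairs = {(i,j). i < j \<and> j < n \<and> adj greedy_edges (\<sigma> i) (\<sigma> j)}"

lemma edge_index_pairs_eq: "edge_index_pairs = (\<lambda>j. (parent_index j, j)) ` {1..<n}"
proof
  show "edge_index_pairs \<subseteq> (\<lambda>j. (parent_index j, j)) ` {1..<n}"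
  proof
    fix q assume "q \<in> edge_index_pairs"
    then obtain i j where q: "q = (i,j)" "i < j" "j < n" "adj greedy_edges (\<sigma> i) (\<sigma> j)"
      unfolding edge_index_pairs_def by auto
    then have "(1 \<le> i \<and> j = parent_index i) \<or> (1 \<le> j \<and> i = parent_index j)"
      using adj_greedy_iff by simp
    moreover have "\<not> (1 \<le> i \<and> j = parent_index i)" using parent_index_less[of i] q by auto
    ultimately show "q \<in> (\<lambda>j. (parent_index j, j)) ` {1..<n}" using q by auto
  qed
next
  show "(\<lambda>j. (parent_index j, j)) ` {1..<n} \<subseteq> edge_index_pairs"
    unfolding edge_index_pairs_def
    using adj_greedy_iff parent_index_less parent_index_less_n by auto
qed

lemma sum_crossing_edge_index_pairs: assumes "1 \<le> m" "m < n"
  shows "(\<Sum>q\<in>crossing edge_index_pairs m. cut_weight a m (snd q))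
       = (\<Sum>j\<in>{m..last_child (m - 1)}. cut_weight a m j)"
proof -
  have "crossing edge_index_pairs m
      = (\<lambda>j. (parent_index j, j)) ` {j\<in>{1..<n}. parent_index j < m \<and> m \<le> j}"
    unfolding crossing_def edge_index_pairs_eq by auto
  also have "\<dots> = (\<lambda>j. (parent_index j, j)) ` {m..last_child (m - 1)}"
    using children_crossing_cut[OF assms] by simp
  finally show ?thesis by (simp add: sum.reindex inj_on_def)
qed

lemma finite_edge_index_pairs: "finite edge_index_pairs" unfolding edge_index_pairs_eq by simp

lemma edge_index_pairs_less: "(i,j) \<in> edge_index_pairs \<Longrightarrow> i < j \<and> j < n"
  unfolding edge_index_pairs_def by auto

end

section \<open>Degree sequences of trees with boundary\<close>

lemma sum_take_sorted_le:
  fixes xs :: "nat list"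
  shows "sorted xs \<Longrightarrow> mset ys \<subseteq># mset xs \<Longrightarrow> sum_list (take (length ys) xs) \<le> sum_list ys"
proof (induction xs arbitrary: ys)
  case (Cons x xs)
  show ?case
  proof (cases ys)
    case (Cons y0 ys0)
    define y where "y = (if x \<in> set ys then x else hd ys)"
    have y: "y \<in> set ys" unfolding y_def using Cons by auto
    then have "y \<in> set (x # xs)" using Cons.prems(2) by (metis mset_subset_eqD set_mset_mset)
    then have xy: "x \<le> y" using Cons.prems(1) by auto
    have sub: "mset (remove1 y ys) \<subseteq># mset xs"
    proof (cases "x \<in> set ys")
      case True
      then show ?thesis using Cons.prems(2) by (simp add: y_def subset_eq_diff_conv)
    next
      case False
      then have "mset ys \<subseteq># mset xs"
        using Cons.prems(2) by (metis Diff_eq_empty_iff_mset minus_add_mset_if_not_in_lhs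
            mset.simps(2) set_mset_mset)
      then show ?thesis by (metis diff_subset_eq_self mset_remove1 subset_mset.trans)
    qed
    have "sum_mset (mset ys) = sum_mset (add_mset y (mset (remove1 y ys)))"
      using y by (simp add: insert_DiffM)
    then have "sum_list ys = y + sum_list (remove1 y ys)"
      by (simp only: sum_mset_sum_list sum_mset.add_mset)
    moreover have "sum_list (take (length (remove1 y ys)) xs) \<le> sum_list (remove1 y ys)"
      using Cons.IH[OF _ sub] Cons.prems(1) by simp
    moreover have "length ys = Suc (length (remove1 y ys))"
      using y by (simp add: length_remove1) (metis Cons length_Cons length_pos_if_in_set Suc_pred)
    ultimately show ?thesis using xy by simp
  qed simp
qed simp

lemma decreasing_enumeration:
  fixes f :: "'a \<Rightarrow> real"
  assumes "finite V"
  shows "\<exists>\<sigma>. bij_betw \<sigma> {0..<card V} V \<and> (\<forall>i j. i \<le> j \<longrightarrow> j < card V \<longrightarrow> f (\<sigma> j) \<le> f (\<sigma> i))"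
proof -
  obtain l where l: "set l = V" "distinct l" using finite_distinct_list[OF assms] by blast
  define ys where "ys = sort_key (\<lambda>v. - f v) l"
  have ys: "set ys = V" "distinct ys" "length ys = card V"
    unfolding ys_def using l by (auto simp: distinct_card[symmetric])
  have s: "sorted (map (\<lambda>v. - f v) ys)" unfolding ys_def by simp
  have "bij_betw ((!) ys) {0..<card V} V"
    by (rule bij_betw_nth) (use ys in \<open>auto simp: atLeast0LessThan\<close>)
  moreover have "\<forall>i j. i \<le> j \<longrightarrow> j < card V \<longrightarrow> f (ys ! j) \<le> f (ys ! i)"
  proof (intro allI impI)
    fix i j assume "i \<le> j" "j < card V"
    then have "map (\<lambda>v. - f v) ys ! i \<le> map (\<lambda>v. - f v) ys ! j"
      using s ys(3) by (intro sorted_nth_mono) auto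
    then show "f (ys ! j) \<le> f (ys ! i)" using \<open>i \<le> j\<close> \<open>j < card V\<close> ys(3) by simp
  qed
  ultimately show ?thesis by blast
qed

lemma tree_with_boundary_graph:
  assumes "tree_with_boundary V E"
  shows "graph V E" "finite V" "V = boundary V E \<union> Defs.interior V E"
    "boundary V E \<inter> Defs.interior V E = {}"
  using assms unfolding tree_with_boundary_def is_tree_def graph_def boundary_def Defs.interior_def
  by auto

lemma length_sorted_list_image_mset_set:
  "length (sorted_list_of_multiset (image_mset f (mset_set A))) = card A"
  by (metis mset_sorted_list_of_multiset size_image_mset size_mset size_mset_set)

lemma sum_list_sorted_list_image_mset_set:
  "sum_list (sorted_list_of_multiset (image_mset f (mset_set A))) = (\<Sum>v\<in>A. f v)"
  by (metis mset_sorted_list_of_multiset sum_mset_sum_list sum_unfold_sum_mset)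

lemma sum_list_deg_seq:
  assumes t: "tree_with_boundary V E"
  shows "sum_list (deg_seq V E) = 2 * (card V - 1)"
proof -
  note G = tree_with_boundary_graph[OF t]
  obtain r where r: "r \<in> V" using t unfolding tree_with_boundary_def by blast
  interpret rooted_tree V E r
    using t r G(1) unfolding tree_with_boundary_def is_tree_def by unfold_locales auto
  have "(\<Sum>v\<in>V. deg E v) = (\<Sum>v\<in>boundary V E. deg E v) + (\<Sum>v\<in>Defs.interior V E. deg E v)"
    using G by (metis finite_Un sum.union_disjoint)
  moreover have "(\<Sum>v\<in>boundary V E. deg E v) = card (boundary V E)"
    unfolding boundary_def by simp
  ultimately show ?thesis
    using sum_deg by (simp add: deg_seq_def sum_list_replicate sum_list_sorted_list_image_mset_set)
qed

lemma degree_sequence_deg_seq: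
  assumes t: "tree_with_boundary V E"
  shows "degree_sequence (deg_seq V E) (card V) (card (Defs.interior V E))"
proof -
  note G = tree_with_boundary_graph[OF t]
  define I where "I = Defs.interior V E"
  define xs where "xs = sorted_list_of_multiset (image_mset (deg E) (mset_set I))"
  have fI: "finite I" "finite (boundary V E)" using G(2,3) unfolding I_def by (metis finite_Un)+
  have xs: "sorted xs" "length xs = card I" "\<forall>x\<in>set xs. 2 \<le> x"
    using fI unfolding xs_def I_def Defs.interior_def
    by (auto simp: length_sorted_list_image_mset_set)
  have ds: "deg_seq V E = xs @ replicate (card (boundary V E)) 1"
    unfolding deg_seq_def xs_def I_def ..
  have cV: "card V = card (boundary V E) + card I"
    using G(3,4) fI unfolding I_def by (metis card_Un_disjoint)
  have ne: "I \<noteq> {}" "boundary V E \<noteq> {}" using t unfolding tree_with_boundary_def I_def by auto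
  show ?thesis
  proof
    show "length (deg_seq V E) = card V" using ds xs cV by simp
    fix i
    show "i < card (Defs.interior V E) \<Longrightarrow> 2 \<le> deg_seq V E ! i"
      using ds xs unfolding I_def[symmetric] by (simp add: nth_append)
    show "card (Defs.interior V E) \<le> i \<Longrightarrow> i < card V \<Longrightarrow> deg_seq V E ! i = 1"
      using ds xs cV unfolding I_def[symmetric] by (simp add: nth_append)
  next
    show "sorted (take (card (Defs.interior V E)) (deg_seq V E))"
      using ds xs unfolding I_def[symmetric] by simp
    show "sum_list (deg_seq V E) = 2 * (card V - 1)" using sum_list_deg_seq[OF t] .
    show "1 \<le> card (Defs.interior V E)" "card (Defs.interior V E) < card V"
      using ne fI cV unfolding I_def[symmetric] by (simp_all add: Suc_leI card_gt_0_iff)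
  qed
qed

lemma sum_take_deg_seq_le:
  assumes "finite V" "T \<subseteq> Defs.interior V E"
  shows "sum_list (take (card T) (deg_seq V E)) \<le> (\<Sum>v\<in>T. deg E v)"
proof -
  have fI: "finite (Defs.interior V E)" using assms(1) unfolding Defs.interior_def by simp
  have fT: "finite T" using fI assms(2) finite_subset by blast
  define xs where "xs = sorted_list_of_multiset (image_mset (deg E) (mset_set (Defs.interior V E)))"
  define ys where "ys = sorted_list_of_multiset (image_mset (deg E) (mset_set T))"
  have "mset ys \<subseteq># mset xs" unfolding ys_def xs_def
    using assms(2) fT fI by (simp add: image_mset_subseteq_mono)
  then have "sum_list (take (length ys) xs) \<le> sum_list ys"
    using sum_take_sorted_le[of xs ys] unfolding xs_def by simp
  moreover have "length ys = card T" "sum_list ys = (\<Sum>v\<in>T. deg E v)"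
    unfolding ys_def
    by (simp_all add: length_sorted_list_image_mset_set sum_list_sorted_list_image_mset_set)
  moreover have "card T \<le> length xs"
    using card_mono[OF fI assms(2)]
    unfolding xs_def by (simp add: length_sorted_list_image_mset_set)
  ultimately show ?thesis unfolding deg_seq_def xs_def[symmetric] by simp
qed

lemma majorized_interior_count_le:
  assumes d: "degree_sequence ds n k" and d': "degree_sequence ds' n k'" and mj: "maj_le ds' ds"
  shows "k \<le> k'"
proof (rule ccontr)
  assume "\<not> k \<le> k'"
  then have lt: "k' < k" by simp
  interpret A: degree_sequence ds n k by (rule d)
  interpret B: degree_sequence ds' n k' by (rule d')
  have mm: "\<forall>r<n. sum_list (take (Suc r) ds') \<le> sum_list (take (Suc r) ds)"
    using mj A.length_ds unfolding maj_le_def by simp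
  have m: "sum_list (take k' ds') \<le> sum_list (take k' ds)"
    using mm[rule_format, of "k' - 1"] B.k by simp
  have t1: "sum_list (take k' ds') + (n - k') = 2 * (n - 1)"
    using B.sum_take_plus_tail[of k'] B.k B.leaf_entries by simp
  have t2: "sum_list (take k' ds) + (\<Sum>l\<in>{k'..<n}. ds ! l) = 2 * (n - 1)"
    using A.sum_take_plus_tail[of k'] B.k by simp
  have t3: "(n - k') + (k - k') \<le> (\<Sum>l\<in>{k'..<n}. ds ! l)"
    using A.tail_sum_lower_bound[of k'] lt by simp
  show False using m t1 t2 t3 lt by linarith
qed

section \<open>Comparing the Dirichlet forms\<close>

locale greedy_comparison = greedy_tree +
  fixes E :: "'a set set" and f :: "'a \<Rightarrow> real"
  assumes tree: "tree_with_boundary V E"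
    and majorized: "maj_le ds (deg_seq V E)"
    and f_nonneg: "\<And>u. 0 \<le> f u"
    and f_supp: "\<And>u. u \<notin> Defs.interior V E \<Longrightarrow> f u = 0"
    and f_antimono: "\<And>i j. i \<le> j \<Longrightarrow> j < n \<Longrightarrow> f (\<sigma> j) \<le> f (\<sigma> i)"
begin

abbreviation a :: "nat \<Rightarrow> real" where "a \<equiv> \<lambda>j. f (\<sigma> j)"

definition edge_index_pairs_G where
  "edge_index_pairs_G = {(i,j). i < j \<and> j < n \<and> adj E (\<sigma> i) (\<sigma> j)}"

lemma card_V: "card V = n"
  using bij_betw_same_card[OF bij] by simp

lemma card_interior_le: "card (Defs.interior V E) \<le> k"
  using majorized_interior_count_le[OF degree_sequence_deg_seq[OF tree, unfolded card_V]
      degree_sequence_axioms majorized] .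

lemma card_sigma_image: "m \<le> n \<Longrightarrow> card (\<sigma> ` {0..<m}) = m"
  using inj_on_subset[OF sigma_inj, of "{0..<m}"] by (simp add: card_image)

lemma prefix_in_interior:
  assumes "m \<le> n" "0 < f (\<sigma> (m - 1))"
  shows "\<sigma> ` {0..<m} \<subseteq> Defs.interior V E"
proof
  fix v assume "v \<in> \<sigma> ` {0..<m}"
  then obtain i where i: "i < m" "v = \<sigma> i" by auto
  then have "f (\<sigma> (m - 1)) \<le> f v" using f_antimono[of i "m - 1"] assms(1) by simp
  then have "0 < f v" using assms(2) by linarith
  then show "v \<in> Defs.interior V E" using f_supp by force
qed

lemma f_vanishes_beyond_interior:
  assumes "card (Defs.interior V E) \<le> j" "j < n"
  shows "f (\<sigma> j) = 0"
proof (rule ccontr)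
  assume "f (\<sigma> j) \<noteq> 0"
  then have "\<sigma> ` {0..<Suc j} \<subseteq> Defs.interior V E"
    using prefix_in_interior[of "Suc j"] f_nonneg[of "\<sigma> j"] assms(2) by simp
  moreover have "finite (Defs.interior V E)"
    using tree_with_boundary_graph(2)[OF tree] by (simp add: Defs.interior_def)
  ultimately have "card (\<sigma> ` {0..<Suc j}) \<le> card (Defs.interior V E)"
    by (rule card_mono[rotated])
  then have "Suc j \<le> card (Defs.interior V E)"
    using card_sigma_image[of "Suc j"] assms(2) by simp
  then show False using assms(1) by simp
qed

lemma f_supp_greedy: "u \<notin> Defs.interior V greedy_edges \<Longrightarrow> f u = 0"
proof (cases "u \<in> V")
  case True
  assume u: "u \<notin> Defs.interior V greedy_edges"
  obtain j where j: "j < n" "u = \<sigma> j" using True V_sigma by blast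
  then have "k \<le> j" using u unfolding interior_greedy by auto
  then show "f u = 0" using f_vanishes_beyond_interior[of j] card_interior_le j by simp
qed (simp add: f_supp Defs.interior_def)

lemma outer_neighbours_prefix:
  assumes "m \<le> n"
  shows "{y \<in> V - \<sigma> ` {0..<m}. \<exists>t\<in>\<sigma> ` {0..<m}. adj E t y} = \<sigma> ` snd ` crossing edge_index_pairs_G m"
    (is "?N = _")
proof
  show "?N \<subseteq> \<sigma> ` snd ` crossing edge_index_pairs_G m"
  proof
    fix y assume "y \<in> ?N"
    then have y: "y \<in> V" "y \<notin> \<sigma> ` {0..<m}" "\<exists>t\<in>\<sigma> ` {0..<m}. adj E t y" by auto
    obtain i where i: "i < m" "adj E (\<sigma> i) y" using y(3) by auto
    obtain j where j: "j < n" "y = \<sigma> j" using V_sigma y(1) by blast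
    have "\<not> j < m" using y(2) j(2) by auto
    then have "(i, j) \<in> crossing edge_index_pairs_G m"
      using i j unfolding crossing_def edge_index_pairs_G_def by auto
    then show "y \<in> \<sigma> ` snd ` crossing edge_index_pairs_G m" using j(2) by force
  qed
next
  show "\<sigma> ` snd ` crossing edge_index_pairs_G m \<subseteq> ?N"
  proof
    fix y assume "y \<in> \<sigma> ` snd ` crossing edge_index_pairs_G m"
    then obtain i j where ij: "y = \<sigma> j" "i < m" "m \<le> j" "j < n" "adj E (\<sigma> i) (\<sigma> j)"
      unfolding crossing_def edge_index_pairs_G_def by auto
    have "y \<notin> \<sigma> ` {0..<m}"
    proof
      assume "y \<in> \<sigma> ` {0..<m}"
      then obtain l where "l < m" "\<sigma> l = \<sigma> j" using ij(1) by auto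
      then show False using sigma_eq_iff[of l j] ij assms by simp
    qed
    moreover have "y \<in> V" using ij sigma_image by auto
    ultimately show "y \<in> ?N" using ij by auto
  qed
qed

text \<open>This is where majorisation enters: the first \<open>m\<close> vertices of \<open>\<sigma>\<close> are interior in \<open>(V, E)\<close>,
  so their degree sum, and hence their number of outer neighbours, is at least what the greedy
  tree gives them.\<close>

lemma card_crossing_ge:
  assumes m: "1 \<le> m" "m < n" and pos: "0 < f (\<sigma> (m - 1))"
  shows "last_child (m - 1) + 1 - m \<le> card (snd ` crossing edge_index_pairs_G m)"
proof -
  define T where "T = \<sigma> ` {0..<m}"
  have TI: "T \<subseteq> Defs.interior V E" unfolding T_def using prefix_in_interior pos m by simp
  have cT: "card T = m" unfolding T_def using card_sigma_image m by simp
  have "\<sigma> 0 \<in> V" using sigma_image m by auto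
  then interpret G: rooted_tree V E "\<sigma> 0"
    using tree unfolding tree_with_boundary_def is_tree_def by unfold_locales auto
  have TV: "T \<subseteq> V" "T \<noteq> {}" using TI cT m by (auto simp: Defs.interior_def)
  have outer: "(\<Sum>v\<in>T. deg E v) + 2 \<le> 2 * m + card (\<sigma> ` snd ` crossing edge_index_pairs_G m)"
    using G.sum_deg_le_outer_neighbours[OF TV] outer_neighbours_prefix[of m] cT m
    unfolding T_def by simp
  have "sum_list (take m ds) \<le> sum_list (take m (deg_seq V E))"
    using majorized m length_ds unfolding maj_le_def
    by (metis One_nat_def Suc_pred less_eq_Suc_le less_imp_diff_less)
  also have "\<dots> \<le> (\<Sum>v\<in>T. deg E v)"
    using sum_take_deg_seq_le[OF G.finite_V TI] cT by simp
  finally have "last_child (m - 1) + (m - 1) \<le> (\<Sum>v\<in>T. deg E v)"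
    using sum_take_eq_dsum[of m] dsum_eq_last_child[of "m - 1"] m by simp
  moreover have "card (\<sigma> ` snd ` crossing edge_index_pairs_G m)
      = card (snd ` crossing edge_index_pairs_G m)"
    by (intro card_image inj_on_subset[OF sigma_inj])
      (auto simp: crossing_def edge_index_pairs_G_def)
  ultimately show ?thesis using outer m by linarith
qed

lemma finite_edge_index_pairs_G: "finite edge_index_pairs_G"
  unfolding edge_index_pairs_G_def by (rule finite_subset[of _ "{0..<n} \<times> {0..<n}"]) auto

lemma edge_index_pairs_G_less: "(i,j) \<in> edge_index_pairs_G \<Longrightarrow> i < j \<and> j < n"
  unfolding edge_index_pairs_G_def by auto

lemma crossing_weight_le:
  assumes m: "1 \<le> m" "m < n" and drop: "a m < a (m - 1)"
  shows "(\<Sum>q\<in>crossing edge_index_pairs m. cut_weight a m (snd q))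
       \<le> (\<Sum>q\<in>crossing edge_index_pairs_G m. cut_weight a m (snd q))"
proof -
  define N where "N = last_child (m - 1) + 1 - m"
  have "0 < a (m - 1)" using drop f_nonneg[of "\<sigma> m"] by simp
  then have N: "N \<le> card (snd ` crossing edge_index_pairs_G m)"
    unfolding N_def using card_crossing_ge m by simp
  have "{m..<m + N} = {m..last_child (m - 1)}"
    unfolding N_def using last_child_ge m by auto
  then have "(\<Sum>q\<in>crossing edge_index_pairs m. cut_weight a m (snd q))
      = (\<Sum>j\<in>{m..<m + N}. cut_weight a m j)"
    using sum_crossing_edge_index_pairs[OF m, of a] by simp
  also have "\<dots> \<le> (\<Sum>q\<in>crossing edge_index_pairs_G m. cut_weight a m (snd q))"
    by (rule initial_cut_weight_le[OF finite_edge_index_pairs_G edge_index_pairs_G_less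
          f_antimono m N])
  finally show ?thesis .
qed

lemma dform_greedy_le: "dirichlet_graph.dform V greedy_edges f \<le> dirichlet_graph.dform V E f"
proof -
  interpret G: dirichlet_graph V E using tree_with_boundary_graph(1)[OF tree] by unfold_locales
  interpret H: dirichlet_graph V greedy_edges using graph_greedy by unfold_locales
  have irrefl: "\<not> adj E v v" "\<not> adj greedy_edges v v" for v
    using adj_imp_vertices[OF G.graph] adj_imp_vertices[OF H.graph] by blast+
  have "2 * G.dform f = 2 * (\<Sum>(i,j)\<in>edge_index_pairs_G. (a i - a j)\<^sup>2)"
    using G.dform_eq_sum_adj_pairs[of f] f_supp
      sum_adj_pairs_reindex[OF bij irrefl(1), of "\<lambda>v w. (f v - f w)\<^sup>2"]
    unfolding edge_index_pairs_G_def by (simp add: power2_commute)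
  moreover have "2 * H.dform f = 2 * (\<Sum>(i,j)\<in>edge_index_pairs. (a i - a j)\<^sup>2)"
    using H.dform_eq_sum_adj_pairs[of f] f_supp_greedy
      sum_adj_pairs_reindex[OF bij irrefl(2), of "\<lambda>v w. (f v - f w)\<^sup>2"]
    unfolding edge_index_pairs_def by (simp add: power2_commute)
  moreover have "(\<Sum>(i,j)\<in>edge_index_pairs. (a i - a j)\<^sup>2)
      \<le> (\<Sum>(i,j)\<in>edge_index_pairs_G. (a i - a j)\<^sup>2)"
    by (rule sum_sq_diff_le_if_cut_weights_le[OF finite_edge_index_pairs_G edge_index_pairs_G_less
          finite_edge_index_pairs edge_index_pairs_less f_antimono crossing_weight_le])
  ultimately show ?thesis by simp
qed

lemma lambda_D_greedy_le:
  assumes "0 < dirichlet_graph.sqnorm V E f"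
    and "dirichlet_graph.dform V E f \<le> lambda_D V E * dirichlet_graph.sqnorm V E f"
  shows "lambda_D V greedy_edges \<le> lambda_D V E"
proof -
  interpret G: dirichlet_graph V E using tree_with_boundary_graph(1)[OF tree] by unfold_locales
  interpret H: dirichlet_graph V greedy_edges using graph_greedy by unfold_locales
  have "H.I \<noteq> {}" using interior_greedy k by auto
  then have "lambda_D V greedy_edges * H.sqnorm f \<le> H.dform f" by (rule H.lambda_D_le_rayleigh)
  also have "\<dots> \<le> G.dform f" by (rule dform_greedy_le)
  also have "\<dots> \<le> lambda_D V E * G.sqnorm f" by (rule assms(2))
  finally show ?thesis
    using H.sqnorm_eq_sum_V[OF f_supp_greedy] G.sqnorm_eq_sum_V[OF f_supp] assms(1) by simp
qed

end

theorem lemma7: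
  fixes V :: "'a set" and E :: "'a set set" and \<pi>' :: "nat list"
  assumes "tree_with_boundary V E"
    and "\<exists>(V' :: nat set) E'. tree_with_boundary V' E' \<and> card V' = card V \<and> deg_seq V' E' = \<pi>'"
    and "maj_le \<pi>' (deg_seq V E)"
  shows "\<exists>E'. SLO_tree V E' \<and> deg_seq V E' = \<pi>' \<and> lambda_D V E' \<le> lambda_D V E"
proof -
  interpret G: dirichlet_graph V E using tree_with_boundary_graph(1)[OF assms(1)] by unfold_locales
  have "Defs.interior V E \<noteq> {}" using assms(1) unfolding tree_with_boundary_def by simp
  then obtain f where f: "\<And>u. 0 \<le> f u" "\<And>u. u \<notin> Defs.interior V E \<Longrightarrow> f u = 0"
      "0 < G.sqnorm f" "G.dform f \<le> lambda_D V E * G.sqnorm f"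
    using G.nonneg_rayleigh_witness by blast
  obtain \<sigma> where \<sigma>: "bij_betw \<sigma> {0..<card V} V"
      "\<And>i j. i \<le> j \<Longrightarrow> j < card V \<Longrightarrow> f (\<sigma> j) \<le> f (\<sigma> i)"
    using decreasing_enumeration[OF G.finite_V, of f] by blast
  obtain V' :: "nat set" and E'
    where "tree_with_boundary V' E'" "card V' = card V" "deg_seq V' E' = \<pi>'"
    using assms(2) by blast
  then have "degree_sequence \<pi>' (card V) (card (Defs.interior V' E'))"
    using degree_sequence_deg_seq by metis
  then interpret C: greedy_comparison \<pi>' "card V" "card (Defs.interior V' E')" V \<sigma> E f
    using \<sigma> f(1,2) assms(1,3) by (simp add: greedy_comparison_def greedy_comparison_axioms_def
        greedy_tree_def greedy_tree_axioms_def)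
  show ?thesis using C.SLO_tree_greedy C.deg_seq_greedy C.lambda_D_greedy_le f(3,4) by blast
qed
end
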